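(* Let $(H,\beta)$ be a monoidal Hom-bialgebra and let $(A,\alpha)$ be a left $(H,\beta)$-Hom-comodule algebra with left Hom-coaction $\varphi:A\to H\otimes A$, $\varphi(a)=a_{(-1)}\otimes a_{(0)}$. Let $(\Gamma,\gamma)$ be a first order differential calculus over $(A,\alpha)$ with differential $d:A\to\Gamma$. Then the following are equivalent: (1) $(\Gamma,\gamma)$ is left-covariant with respect to $(H,\beta)$; (2) there is a morphism $\phi:(\Gamma,\gamma)\to(H\otimes\Gamma,\beta\otimes\gamma)$ in $\widetilde{\mathcal{H}}(\mathcal{M}_k)$ such that $\phi(a\cdot db)=\varphi(a)\,(\mathrm{id}\otimes d)(\varphi(b))$ for all $a,b\in A$; (3) for all finite families $a_i,b_i\in A$, $\sum_i a_i\cdot db_i=0$ in $\Gamma$ implies $\sum_i\varphi(a_i)\,(\mathrm{id}\otimes d)(\varphi(b_i))=0$ in $H\otimes\Gamma$.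
   Context: All vector spaces are over a field $k$. $\widetilde{\mathcal{H}}(\mathcal{M}_k)$ is the category whose objects are pairs $(M,\mu)$ with $M$ a $k$-vector space and $\mu$ a linear automorphism of $M$, and whose morphisms $f:(M,\mu)\to(N,\nu)$ are linear maps with $\nu\circ f=f\circ\mu$; tensor product $(M\otimes N,\mu\otimes\nu)$. A monoidal Hom-algebra $(A,\alpha)$ is an object with multiplication $a\otimes b\mapsto ab$ and unit $1_A$ such that $\alpha(ab)=\alpha(a)\alpha(b)$, $\alpha(1_A)=1_A$, $\alpha(a)(bc)=(ab)\alpha(c)$, $1_Aa=a1_A=\alpha(a)$. A monoidal Hom-coalgebra $(C,\beta)$ is an object with comultiplication $\Delta(c)=c_1\otimes c_2$ and counit $\varepsilon$ satisfying $\Delta\circ\beta=(\beta\otimes\beta)\circ\Delta$, $\varepsilon\circ\beta=\varepsilon$, $\beta^{-1}(c_1)\otimes c_{21}\otimes c_{22}=c_{11}\otimes c_{12}\otimes\beta^{-1}(c_2)$, $\varepsilon(c_1)c_2=c_1\varepsilon(c_2)=\beta^{-1}(c)$. A monoidal Hom-bialgebra is both, with $\Delta,\varepsilon$ multiplicative and unital. Left Hom-module $(M,\mu)$ over $(A,\alpha)$: a morphism $a\otimes m\mapsto a\cdot m$ with $\alpha(a)\cdot(b\cdot m)=(ab)\cdot\mu(m)$, $1_A\cdot m=\mu(m)$; right Hom-module: $(m\cdot a)\cdot\alpha(b)=\mu(m)\cdot(ab)$, $m\cdot 1_A=\mu(m)$; Hom-bimodule: both, with $\alpha(a)\cdot(m\cdot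 b)=(a\cdot m)\cdot\alpha(b)$. A left $(H,\beta)$-Hom-comodule $(M,\mu)$ is given by a morphism $\rho:M\to H\otimes M$, $\rho(m)=m_{(-1)}\otimes m_{(0)}$, with $\beta^{-1}(m_{(-1)})\otimes m_{(0)(-1)}\otimes m_{(0)(0)}=m_{(-1)1}\otimes m_{(-1)2}\otimes\mu^{-1}(m_{(0)})$ and $\varepsilon(m_{(-1)})m_{(0)}=\mu^{-1}(m)$. A left $(H,\beta)$-Hom-comodule algebra $(A,\alpha)$ is a monoidal Hom-algebra which is a left $(H,\beta)$-Hom-comodule via $\varphi$ with $\varphi(ab)=a_{(-1)}b_{(-1)}\otimes a_{(0)}b_{(0)}$ and $\varphi(1_A)=1_H\otimes 1_A$. A first order differential calculus (Hom-FODC) over $(A,\alpha)$ is an $(A,\alpha)$-Hom-bimodule $(\Gamma,\gamma)$ with a linear map $d:A\to\Gamma$ such that $d(ab)=a\cdot db+da\cdot b$, $d\circ\alpha=\gamma\circ d$, and $\Gamma$ is spanned by the elements $(a\cdot db)\cdot c$, $a,b,c\in A$. The space $H\otimes\Gamma$ carries the structures $(h\otimes a)(h'\otimes\omega)=hh'\otimes a\cdot\omega$ and $(h'\otimes\omega)(h\otimes a)=h'h\otimes\omega\cdot a$; thus $\varphi(a)(\mathrm{id}\otimes d)(\varphi(b))=a_{(-1)}b_{(-1)}\otimes a_{(0)}\cdot db_{(0)}$. The Hom-FODC $(\Gamma,\gamma)$ is left-covariant with respect to $(H,\beta)$ if there is a left Hom-coaction $\phi:\Gamma\to H\otimes\Gamma$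 of $(H,\beta)$ on $(\Gamma,\gamma)$ such that $\phi(\alpha(a)\cdot(\omega\cdot b))=\varphi(\alpha(a))(\phi(\omega)\varphi(b))$ for all $a,b\in A$, $\omega\in\Gamma$, and $\phi(da)=(\mathrm{id}\otimes d)\varphi(a)$ for all $a\in A$. *)

theory Defs
  imports Complex_Main "HOL-Library.Function_Algebras"
begin

definition hom_object :: "('k::field \<Rightarrow> 'm::ab_group_add \<Rightarrow> 'm) \<Rightarrow> ('m \<Rightarrow> 'm) \<Rightarrow> bool" where
  "hom_object s \<mu> \<longleftrightarrow> vector_space s \<and> Vector_Spaces.linear s s \<mu> \<and> bij \<mu>"

text \<open>An element of X \<otimes> Y is represented by a finite list of pairs (x_i, y_i), standing for
  the sum of the x_i \<otimes> y_i (scalars can be absorbed in the first factor).  The free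
  k-vector space on X \<times> Y is realised inside the functions X \<times> Y \<Rightarrow> k; two representatives are
  equal in X \<otimes> Y iff the difference of their formal sums lies in the span of the bilinearity
  relations.\<close>

definition fdelta :: "'p \<Rightarrow> 'p \<Rightarrow> 'k::field" where
  "fdelta p = (\<lambda>q. if q = p then 1 else 0)"

definition fsum :: "'p list \<Rightarrow> 'p \<Rightarrow> 'k::field" where
  "fsum xs = (\<lambda>p. of_nat (count_list xs p))"

definition fscale :: "'k::field \<Rightarrow> ('p \<Rightarrow> 'k) \<Rightarrow> ('p \<Rightarrow> 'k)" where
  "fscale c f = (\<lambda>p. c * f p)"

definition rel2 :: "('k::field \<Rightarrow> 'x::ab_group_add \<Rightarrow> 'x) \<Rightarrow> ('k \<Rightarrow> 'y::ab_group_add \<Rightarrow> 'y)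
    \<Rightarrow> ('x \<times> 'y \<Rightarrow> 'k) set" where
  "rel2 sx sy =
     {fdelta (x + x', y) - fdelta (x, y) - fdelta (x', y) | x x' y. True}
   \<union> {fdelta (x, y + y') - fdelta (x, y) - fdelta (x, y') | x y y'. True}
   \<union> {fdelta (sx c x, y) - fscale c (fdelta (x, y)) | c x y. True}
   \<union> {fdelta (x, sy c y) - fscale c (fdelta (x, y)) | c x y. True}"

definition rel3 :: "('k::field \<Rightarrow> 'x::ab_group_add \<Rightarrow> 'x) \<Rightarrow> ('k \<Rightarrow> 'y::ab_group_add \<Rightarrow> 'y)
    \<Rightarrow> ('k \<Rightarrow> 'z::ab_group_add \<Rightarrow> 'z) \<Rightarrow> ('x \<times> 'y \<times> 'z \<Rightarrow> 'k) set" where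
  "rel3 sx sy sz =
     {fdelta (x + x', y, z) - fdelta (x, y, z) - fdelta (x', y, z) | x x' y z. True}
   \<union> {fdelta (x, y + y', z) - fdelta (x, y, z) - fdelta (x, y', z) | x y y' z. True}
   \<union> {fdelta (x, y, z + z') - fdelta (x, y, z) - fdelta (x, y, z') | x y z z'. True}
   \<union> {fdelta (sx c x, y, z) - fscale c (fdelta (x, y, z)) | c x y z. True}
   \<union> {fdelta (x, sy c y, z) - fscale c (fdelta (x, y, z)) | c x y z. True}
   \<union> {fdelta (x, y, sz c z) - fscale c (fdelta (x, y, z)) | c x y z. True}"

definition teq2 :: "('k::field \<Rightarrow> 'x::ab_group_add \<Rightarrow> 'x) \<Rightarrow> ('k \<Rightarrow> 'y::ab_group_add \<Rightarrow> 'y)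
    \<Rightarrow> ('x \<times> 'y) list \<Rightarrow> ('x \<times> 'y) list \<Rightarrow> bool" where
  "teq2 sx sy xs ys \<longleftrightarrow> fsum xs - fsum ys \<in> module.span fscale (rel2 sx sy)"

definition teq3 :: "('k::field \<Rightarrow> 'x::ab_group_add \<Rightarrow> 'x) \<Rightarrow> ('k \<Rightarrow> 'y::ab_group_add \<Rightarrow> 'y)
    \<Rightarrow> ('k \<Rightarrow> 'z::ab_group_add \<Rightarrow> 'z)
    \<Rightarrow> ('x \<times> 'y \<times> 'z) list \<Rightarrow> ('x \<times> 'y \<times> 'z) list \<Rightarrow> bool" where
  "teq3 sx sy sz xs ys \<longleftrightarrow> fsum xs - fsum ys \<in> module.span fscale (rel3 sx sy sz)"

definition tscale :: "('k::field \<Rightarrow> 'x::ab_group_add \<Rightarrow> 'x) \<Rightarrow> 'k \<Rightarrow> ('x \<times> 'y) list \<Rightarrow> ('x \<times> 'y) list" where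
  "tscale sx c xs = map (\<lambda>(x, y). (sx c x, y)) xs"

text \<open>A morphism (M,\<mu>) \<rightarrow> (X \<otimes> Y, \<xi> \<otimes> \<eta>) in H~(M_k), given on representatives:
  linear (modulo the tensor relations) and commuting with the structure maps.\<close>
definition tmorphism :: "('k::field \<Rightarrow> 'm::ab_group_add \<Rightarrow> 'm) \<Rightarrow> ('m \<Rightarrow> 'm)
    \<Rightarrow> ('k \<Rightarrow> 'x::ab_group_add \<Rightarrow> 'x) \<Rightarrow> ('x \<Rightarrow> 'x)
    \<Rightarrow> ('k \<Rightarrow> 'y::ab_group_add \<Rightarrow> 'y) \<Rightarrow> ('y \<Rightarrow> 'y)
    \<Rightarrow> ('m \<Rightarrow> ('x \<times> 'y) list) \<Rightarrow> bool" where
  "tmorphism sm \<mu> sx \<xi> sy \<eta> f \<longleftrightarrow>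
     (\<forall>m n. teq2 sx sy (f (m + n)) (f m @ f n)) \<and>
     (\<forall>c m. teq2 sx sy (f (sm c m)) (tscale sx c (f m))) \<and>
     (\<forall>m. teq2 sx sy (f (\<mu> m)) (map (\<lambda>(x, y). (\<xi> x, \<eta> y)) (f m)))"

definition bilinear_map :: "('k::field \<Rightarrow> 'x::ab_group_add \<Rightarrow> 'x) \<Rightarrow> ('k \<Rightarrow> 'y::ab_group_add \<Rightarrow> 'y)
    \<Rightarrow> ('k \<Rightarrow> 'z::ab_group_add \<Rightarrow> 'z) \<Rightarrow> ('x \<Rightarrow> 'y \<Rightarrow> 'z) \<Rightarrow> bool" where
  "bilinear_map sx sy sz f \<longleftrightarrow>
     (\<forall>y. Vector_Spaces.linear sx sz (\<lambda>x. f x y)) \<and> (\<forall>x. Vector_Spaces.linear sy sz (f x))"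

definition hom_algebra :: "('k::field \<Rightarrow> 'a::ab_group_add \<Rightarrow> 'a) \<Rightarrow> ('a \<Rightarrow> 'a)
    \<Rightarrow> ('a \<Rightarrow> 'a \<Rightarrow> 'a) \<Rightarrow> 'a \<Rightarrow> bool" where
  "hom_algebra s \<alpha> mul one \<longleftrightarrow>
     hom_object s \<alpha> \<and> bilinear_map s s s mul \<and>
     (\<forall>a b. \<alpha> (mul a b) = mul (\<alpha> a) (\<alpha> b)) \<and> \<alpha> one = one \<and>
     (\<forall>a b c. mul (\<alpha> a) (mul b c) = mul (mul a b) (\<alpha> c)) \<and>
     (\<forall>a. mul one a = \<alpha> a \<and> mul a one = \<alpha> a)"

definition hom_coalgebra :: "('k::field \<Rightarrow> 'c::ab_group_add \<Rightarrow> 'c) \<Rightarrow> ('c \<Rightarrow> 'c)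
    \<Rightarrow> ('c \<Rightarrow> ('c \<times> 'c) list) \<Rightarrow> ('c \<Rightarrow> 'k) \<Rightarrow> bool" where
  "hom_coalgebra s \<beta> \<Delta> \<epsilon> \<longleftrightarrow>
     hom_object s \<beta> \<and> tmorphism s \<beta> s \<beta> s \<beta> \<Delta> \<and>
     Vector_Spaces.linear s (*) \<epsilon> \<and> (\<forall>c. \<epsilon> (\<beta> c) = \<epsilon> c) \<and>
     (\<forall>c. teq3 s s s
        (concat (map (\<lambda>(x, y). map (\<lambda>(u, v). (inv \<beta> x, u, v)) (\<Delta> y)) (\<Delta> c)))
        (concat (map (\<lambda>(x, y). map (\<lambda>(u, v). (u, v, inv \<beta> y)) (\<Delta> x)) (\<Delta> c)))) \<and>
     (\<forall>c. sum_list (map (\<lambda>(x, y). s (\<epsilon> x) y) (\<Delta> c)) = inv \<beta> c) \<and>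
     (\<forall>c. sum_list (map (\<lambda>(x, y). s (\<epsilon> y) x) (\<Delta> c)) = inv \<beta> c)"

definition hom_bialgebra :: "('k::field \<Rightarrow> 'h::ab_group_add \<Rightarrow> 'h) \<Rightarrow> ('h \<Rightarrow> 'h)
    \<Rightarrow> ('h \<Rightarrow> 'h \<Rightarrow> 'h) \<Rightarrow> 'h \<Rightarrow> ('h \<Rightarrow> ('h \<times> 'h) list) \<Rightarrow> ('h \<Rightarrow> 'k) \<Rightarrow> bool" where
  "hom_bialgebra s \<beta> mul one \<Delta> \<epsilon> \<longleftrightarrow>
     hom_algebra s \<beta> mul one \<and> hom_coalgebra s \<beta> \<Delta> \<epsilon> \<and>
     (\<forall>a b. teq2 s s (\<Delta> (mul a b))
        (concat (map (\<lambda>(x, y). map (\<lambda>(x', y'). (mul x x', mul y y')) (\<Delta> b)) (\<Delta> a)))) \<and>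
     teq2 s s (\<Delta> one) [(one, one)] \<and>
     (\<forall>a b. \<epsilon> (mul a b) = \<epsilon> a * \<epsilon> b) \<and> \<epsilon> one = 1"

definition hom_comodule :: "('k::field \<Rightarrow> 'h::ab_group_add \<Rightarrow> 'h) \<Rightarrow> ('h \<Rightarrow> 'h)
    \<Rightarrow> ('h \<Rightarrow> ('h \<times> 'h) list) \<Rightarrow> ('h \<Rightarrow> 'k)
    \<Rightarrow> ('k \<Rightarrow> 'm::ab_group_add \<Rightarrow> 'm) \<Rightarrow> ('m \<Rightarrow> 'm) \<Rightarrow> ('m \<Rightarrow> ('h \<times> 'm) list) \<Rightarrow> bool" where
  "hom_comodule sH \<beta> \<Delta> \<epsilon> sM \<mu> \<rho> \<longleftrightarrow>
     hom_object sM \<mu> \<and> tmorphism sM \<mu> sH \<beta> sM \<mu> \<rho> \<and>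
     (\<forall>m. teq3 sH sH sM
        (concat (map (\<lambda>(h, n). map (\<lambda>(u, v). (inv \<beta> h, u, v)) (\<rho> n)) (\<rho> m)))
        (concat (map (\<lambda>(h, n). map (\<lambda>(u, v). (u, v, inv \<mu> n)) (\<Delta> h)) (\<rho> m)))) \<and>
     (\<forall>m. sum_list (map (\<lambda>(h, n). sM (\<epsilon> h) n) (\<rho> m)) = inv \<mu> m)"

definition hom_comodule_algebra :: "('k::field \<Rightarrow> 'h::ab_group_add \<Rightarrow> 'h) \<Rightarrow> ('h \<Rightarrow> 'h)
    \<Rightarrow> ('h \<Rightarrow> 'h \<Rightarrow> 'h) \<Rightarrow> 'h \<Rightarrow> ('h \<Rightarrow> ('h \<times> 'h) list) \<Rightarrow> ('h \<Rightarrow> 'k)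
    \<Rightarrow> ('k \<Rightarrow> 'a::ab_group_add \<Rightarrow> 'a) \<Rightarrow> ('a \<Rightarrow> 'a) \<Rightarrow> ('a \<Rightarrow> 'a \<Rightarrow> 'a) \<Rightarrow> 'a
    \<Rightarrow> ('a \<Rightarrow> ('h \<times> 'a) list) \<Rightarrow> bool" where
  "hom_comodule_algebra sH \<beta> mulH oneH \<Delta> \<epsilon> sA \<alpha> mulA oneA \<phi> \<longleftrightarrow>
     hom_algebra sA \<alpha> mulA oneA \<and> hom_comodule sH \<beta> \<Delta> \<epsilon> sA \<alpha> \<phi> \<and>
     (\<forall>a b. teq2 sH sA (\<phi> (mulA a b))
        (concat (map (\<lambda>(h, x). map (\<lambda>(h', y). (mulH h h', mulA x y)) (\<phi> b)) (\<phi> a)))) \<and>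
     teq2 sH sA (\<phi> oneA) [(oneH, oneA)]"

definition hom_bimodule :: "('k::field \<Rightarrow> 'a::ab_group_add \<Rightarrow> 'a) \<Rightarrow> ('a \<Rightarrow> 'a)
    \<Rightarrow> ('a \<Rightarrow> 'a \<Rightarrow> 'a) \<Rightarrow> 'a
    \<Rightarrow> ('k \<Rightarrow> 'g::ab_group_add \<Rightarrow> 'g) \<Rightarrow> ('g \<Rightarrow> 'g)
    \<Rightarrow> ('a \<Rightarrow> 'g \<Rightarrow> 'g) \<Rightarrow> ('g \<Rightarrow> 'a \<Rightarrow> 'g) \<Rightarrow> bool" where
  "hom_bimodule sA \<alpha> mul one sG \<gamma> lact ract \<longleftrightarrow>
     hom_object sG \<gamma> \<and>
     bilinear_map sA sG sG lact \<and> (\<forall>a m. \<gamma> (lact a m) = lact (\<alpha> a) (\<gamma> m)) \<and>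
     bilinear_map sG sA sG ract \<and> (\<forall>m a. \<gamma> (ract m a) = ract (\<gamma> m) (\<alpha> a)) \<and>
     (\<forall>a b m. lact (\<alpha> a) (lact b m) = lact (mul a b) (\<gamma> m)) \<and> (\<forall>m. lact one m = \<gamma> m) \<and>
     (\<forall>a b m. ract (ract m a) (\<alpha> b) = ract (\<gamma> m) (mul a b)) \<and> (\<forall>m. ract m one = \<gamma> m) \<and>
     (\<forall>a b m. lact (\<alpha> a) (ract m b) = ract (lact a m) (\<alpha> b))"

definition hom_FODC :: "('k::field \<Rightarrow> 'a::ab_group_add \<Rightarrow> 'a) \<Rightarrow> ('a \<Rightarrow> 'a)
    \<Rightarrow> ('a \<Rightarrow> 'a \<Rightarrow> 'a) \<Rightarrow> 'a
    \<Rightarrow> ('k \<Rightarrow> 'g::ab_group_add \<Rightarrow> 'g) \<Rightarrow> ('g \<Rightarrow> 'g)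
    \<Rightarrow> ('a \<Rightarrow> 'g \<Rightarrow> 'g) \<Rightarrow> ('g \<Rightarrow> 'a \<Rightarrow> 'g) \<Rightarrow> ('a \<Rightarrow> 'g) \<Rightarrow> bool" where
  "hom_FODC sA \<alpha> mul one sG \<gamma> lact ract d \<longleftrightarrow>
     hom_bimodule sA \<alpha> mul one sG \<gamma> lact ract \<and>
     Vector_Spaces.linear sA sG d \<and>
     (\<forall>a b. d (mul a b) = lact a (d b) + ract (d a) b) \<and>
     (\<forall>a. d (\<alpha> a) = \<gamma> (d a)) \<and>
     module.span sG {ract (lact a (d b)) c | a b c. True} = UNIV"

definition tlmult :: "('h \<Rightarrow> 'h \<Rightarrow> 'h) \<Rightarrow> ('a \<Rightarrow> 'g \<Rightarrow> 'g)
    \<Rightarrow> ('h \<times> 'a) list \<Rightarrow> ('h \<times> 'g) list \<Rightarrow> ('h \<times> 'g) list" where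
  "tlmult mulH lact xs ys =
     concat (map (\<lambda>(h, a). map (\<lambda>(h', w). (mulH h h', lact a w)) ys) xs)"

definition trmult :: "('h \<Rightarrow> 'h \<Rightarrow> 'h) \<Rightarrow> ('g \<Rightarrow> 'a \<Rightarrow> 'g)
    \<Rightarrow> ('h \<times> 'g) list \<Rightarrow> ('h \<times> 'a) list \<Rightarrow> ('h \<times> 'g) list" where
  "trmult mulH ract ys xs =
     concat (map (\<lambda>(h', w). map (\<lambda>(h, a). (mulH h' h, ract w a)) xs) ys)"

definition tid_d :: "('a \<Rightarrow> 'g) \<Rightarrow> ('h \<times> 'a) list \<Rightarrow> ('h \<times> 'g) list" where
  "tid_d d xs = map (\<lambda>(h, a). (h, d a)) xs"

definition left_covariant :: "('k::field \<Rightarrow> 'h::ab_group_add \<Rightarrow> 'h) \<Rightarrow> ('h \<Rightarrow> 'h)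
    \<Rightarrow> ('h \<Rightarrow> 'h \<Rightarrow> 'h) \<Rightarrow> ('h \<Rightarrow> ('h \<times> 'h) list) \<Rightarrow> ('h \<Rightarrow> 'k)
    \<Rightarrow> ('a \<Rightarrow> 'a) \<Rightarrow> ('a \<Rightarrow> ('h \<times> 'a) list)
    \<Rightarrow> ('k \<Rightarrow> 'g::ab_group_add \<Rightarrow> 'g) \<Rightarrow> ('g \<Rightarrow> 'g)
    \<Rightarrow> ('a \<Rightarrow> 'g \<Rightarrow> 'g) \<Rightarrow> ('g \<Rightarrow> 'a \<Rightarrow> 'g) \<Rightarrow> ('a \<Rightarrow> 'g) \<Rightarrow> bool" where
  "left_covariant sH \<beta> mulH \<Delta> \<epsilon> \<alpha> \<phi>A sG \<gamma> lact ract d \<longleftrightarrow>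
     (\<exists>\<phi>. hom_comodule sH \<beta> \<Delta> \<epsilon> sG \<gamma> \<phi> \<and>
        (\<forall>a b \<omega>. teq2 sH sG (\<phi> (lact (\<alpha> a) (ract \<omega> b)))
            (tlmult mulH lact (\<phi>A (\<alpha> a)) (trmult mulH ract (\<phi> \<omega>) (\<phi>A b)))) \<and>
        (\<forall>a. teq2 sH sG (\<phi> (d a)) (tid_d d (\<phi>A a))))"

end

theory Submission
  imports Defs
begin

text \<open>
  Every element of \<open>\<Gamma>\<close> is a finite sum of generators \<open>a\<cdot>db\<close>, because
  \<open>(a\<cdot>db)\<cdot>c = \<alpha>(a)\<cdot>d(b \<alpha>\<^sup>-\<^sup>1(c)) - (ab)\<cdot>dc\<close>.  Hence a morphism \<open>\<phi>\<close> as in (2) is determined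
  by its values on generators, and (3) is exactly the condition under which the formula of (2)
  defines \<open>\<phi>\<close> consistently.  Conversely, for such a \<open>\<phi>\<close> the compatibility with the bimodule
  structure, coassociativity and counitality only need to be checked on generators, where they
  follow from the comodule algebra axioms of \<open>\<phi>\<^sub>A\<close> and the Hom-associativity of the actions.

  Tensors are represented by lists of pairs modulo the span of the multilinearity relations, so
  an equality of tensors is verified by evaluating both sides against all multilinear forms:
  these separate the quotient of the free vector space.
\<close>

section \<open>Linear maps and multilinear forms\<close>

text \<open>Unlike \<^const>\<open>Vector_Spaces.linear\<close>, these notions carry no module axioms, so they make
  sense for an arbitrary scalar multiplication.\<close>

definition linear_map :: "('k::field \<Rightarrow> 'x::ab_group_add \<Rightarrow> 'x) \<Rightarrow> ('k \<Rightarrow> 'y::ab_group_add \<Rightarrow> 'y)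
    \<Rightarrow> ('x \<Rightarrow> 'y) \<Rightarrow> bool" where
  "linear_map s1 s2 f \<longleftrightarrow> (\<forall>x y. f (x + y) = f x + f y) \<and> (\<forall>c x. f (s1 c x) = s2 c (f x))"

definition linear_form :: "('k::field \<Rightarrow> 'x::ab_group_add \<Rightarrow> 'x) \<Rightarrow> ('x \<Rightarrow> 'k) \<Rightarrow> bool" where
  "linear_form s f \<longleftrightarrow> linear_map s (*) f"

definition bilinear_form :: "('k::field \<Rightarrow> 'x::ab_group_add \<Rightarrow> 'x) \<Rightarrow> ('k \<Rightarrow> 'y::ab_group_add \<Rightarrow> 'y)
    \<Rightarrow> ('x \<Rightarrow> 'y \<Rightarrow> 'k) \<Rightarrow> bool" where
  "bilinear_form sx sy B \<longleftrightarrow> (\<forall>y. linear_form sx (\<lambda>x. B x y)) \<and> (\<forall>x. linear_form sy (B x))"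

definition trilinear_form :: "('k::field \<Rightarrow> 'x::ab_group_add \<Rightarrow> 'x) \<Rightarrow> ('k \<Rightarrow> 'y::ab_group_add \<Rightarrow> 'y)
    \<Rightarrow> ('k \<Rightarrow> 'z::ab_group_add \<Rightarrow> 'z) \<Rightarrow> ('x \<Rightarrow> 'y \<Rightarrow> 'z \<Rightarrow> 'k) \<Rightarrow> bool" where
  "trilinear_form sx sy sz T \<longleftrightarrow>
     (\<forall>y z. linear_form sx (\<lambda>x. T x y z)) \<and> (\<forall>x z. linear_form sy (\<lambda>y. T x y z)) \<and>
     (\<forall>x y. linear_form sz (T x y))"

lemma linear_mapI:
  "(\<And>x y. f (x + y) = f x + f y) \<Longrightarrow> (\<And>c x. f (s1 c x) = s2 c (f x)) \<Longrightarrow> linear_map s1 s2 f"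
  by (simp add: linear_map_def)

lemma linear_map_add: "linear_map s1 s2 f \<Longrightarrow> f (x + y) = f x + f y"
  by (simp add: linear_map_def)

lemma linear_map_scale: "linear_map s1 s2 f \<Longrightarrow> f (s1 c x) = s2 c (f x)"
  by (simp add: linear_map_def)

lemma linear_map_diff: "linear_map s1 s2 f \<Longrightarrow> f (x - y) = f x - f y"
  using linear_map_add[of s1 s2 f "x - y" y] by (simp add: eq_diff_eq)

lemma linear_map_zero: "linear_map s1 s2 f \<Longrightarrow> f 0 = 0"
  using linear_map_diff[of s1 s2 f 0 0] by simp

lemma linear_map_id: "linear_map s s (\<lambda>x. x)"
  by (simp add: linear_map_def)

lemma linear_map_comp:
  "linear_map s1 s2 f \<Longrightarrow> linear_map s2 s3 g \<Longrightarrow> linear_map s1 s3 (\<lambda>x. g (f x))"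
  by (simp add: linear_map_def)

lemma linear_imp_linear_map: "Vector_Spaces.linear s1 s2 f \<Longrightarrow> linear_map s1 s2 f"
  unfolding linear_map_def linear_iff_module_hom by (auto dest: module_hom.add module_hom.scale)

lemma linear_map_inv:
  assumes f: "linear_map s s f" and "bij f"
  shows "linear_map s s (inv f)"
proof (rule linear_mapI)
  have f_inv: "f (inv f x) = x" and inv_f: "inv f (f x) = x" for x
    using \<open>bij f\<close> by (simp_all add: bij_is_surj surj_f_inv_f bij_is_inj)
  fix x y c
  have "inv f (x + y) = inv f (f (inv f x + inv f y))"
    by (simp add: linear_map_add[OF f] f_inv)
  then show "inv f (x + y) = inv f x + inv f y"
    by (simp add: inv_f)
  have "inv f (s c x) = inv f (f (s c (inv f x)))"
    by (simp add: linear_map_scale[OF f] f_inv)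
  then show "inv f (s c x) = s c (inv f x)"
    by (simp add: inv_f)
qed

lemma linear_formI:
  "(\<And>x y. f (x + y) = f x + f y) \<Longrightarrow> (\<And>c x. f (s c x) = c * f x) \<Longrightarrow> linear_form s f"
  by (simp add: linear_form_def linear_map_def)

lemma linear_form_add: "linear_form s f \<Longrightarrow> f (x + y) = f x + f y"
  by (simp add: linear_form_def linear_map_add)

lemma linear_form_scale: "linear_form s f \<Longrightarrow> f (s c x) = c * f x"
  by (simp add: linear_form_def linear_map_scale)

lemma linear_form_diff: "linear_form s f \<Longrightarrow> f (x - y) = f x - f y"
  by (simp add: linear_form_def linear_map_diff)

lemma linear_form_zero: "linear_form s f \<Longrightarrow> f 0 = 0"
  by (simp add: linear_form_def linear_map_zero)

lemma linear_form_comp: "linear_form s2 g \<Longrightarrow> linear_map s1 s2 f \<Longrightarrow> linear_form s1 (\<lambda>x. g (f x))"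
  by (simp add: linear_form_def linear_map_comp)

lemma linear_form_cmult: "linear_form s f \<Longrightarrow> linear_form s (\<lambda>x. c * f x)"
  by (simp add: linear_form_def linear_map_def algebra_simps)

lemma linear_form_multc: "linear_form s f \<Longrightarrow> linear_form s (\<lambda>x. f x * c)"
  by (simp add: linear_form_def linear_map_def algebra_simps)

lemma bilinear_formI:
  "(\<And>y. linear_form sx (\<lambda>x. B x y)) \<Longrightarrow> (\<And>x. linear_form sy (\<lambda>y. B x y)) \<Longrightarrow>
    bilinear_form sx sy B"
  by (simp add: bilinear_form_def)

lemma bilinear_form_left: "bilinear_form sx sy B \<Longrightarrow> linear_form sx (\<lambda>x. B x y)"
  by (simp add: bilinear_form_def)

lemma bilinear_form_right: "bilinear_form sx sy B \<Longrightarrow> linear_form sy (\<lambda>y. B x y)"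
  by (simp add: bilinear_form_def)

lemma bilinear_form_comp_left:
  "bilinear_form sx sy B \<Longrightarrow> linear_map s sx f \<Longrightarrow> linear_form s (\<lambda>z. B (f z) y)"
  by (rule linear_form_comp[OF bilinear_form_left])

lemma bilinear_form_comp_right:
  "bilinear_form sx sy B \<Longrightarrow> linear_map s sy f \<Longrightarrow> linear_form s (\<lambda>z. B x (f z))"
  by (rule linear_form_comp[OF bilinear_form_right])

lemmas bilinear_form_comp = bilinear_form_comp_left bilinear_form_comp_right

lemma trilinear_formI:
  "(\<And>y z. linear_form sx (\<lambda>x. T x y z)) \<Longrightarrow> (\<And>x z. linear_form sy (\<lambda>y. T x y z)) \<Longrightarrow>
    (\<And>x y. linear_form sz (\<lambda>z. T x y z)) \<Longrightarrow> trilinear_form sx sy sz T"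
  by (simp add: trilinear_form_def)

lemma trilinear_form_comp1:
  "trilinear_form sx sy sz T \<Longrightarrow> linear_map s sx f \<Longrightarrow> linear_form s (\<lambda>w. T (f w) y z)"
  unfolding trilinear_form_def by (rule linear_form_comp[where g = "\<lambda>x. T x y z"]) simp_all

lemma trilinear_form_comp2:
  "trilinear_form sx sy sz T \<Longrightarrow> linear_map s sy f \<Longrightarrow> linear_form s (\<lambda>w. T x (f w) z)"
  unfolding trilinear_form_def by (rule linear_form_comp[where g = "\<lambda>y. T x y z"]) simp_all

lemma trilinear_form_comp3:
  "trilinear_form sx sy sz T \<Longrightarrow> linear_map s sz f \<Longrightarrow> linear_form s (\<lambda>w. T x y (f w))"
  unfolding trilinear_form_def by (rule linear_form_comp[where g = "T x y"]) simp_all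

lemmas trilinear_form_comp = trilinear_form_comp1 trilinear_form_comp2 trilinear_form_comp3

lemma eq_if_linear_forms_eq:
  assumes "vector_space s" and H: "\<And>g. linear_form s g \<Longrightarrow> g u = (g v :: 'k::field)"
  shows "u = (v :: 'x::ab_group_add)"
proof (rule ccontr)
  assume "u \<noteq> v"
  interpret V: vector_space "s :: 'k \<Rightarrow> 'x \<Rightarrow> 'x"
    by fact
  interpret VK: vector_space_pair "s :: 'k \<Rightarrow> 'x \<Rightarrow> 'x" "(*) :: 'k \<Rightarrow> 'k \<Rightarrow> 'k"
    by unfold_locales (auto simp: algebra_simps)
  have "V.independent {u - v}"
    using \<open>u \<noteq> v\<close> by simp
  then obtain g where g: "Vector_Spaces.linear s (*) g" "\<forall>x\<in>{u - v}. g x = 1"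
    using VK.linear_independent_extend[of _ "\<lambda>_. 1"] by blast
  have g_linear: "linear_form s g"
    unfolding linear_form_def by (rule linear_imp_linear_map[OF g(1)])
  have "g (u - v) = 0"
    using linear_form_diff[OF g_linear, of u v] H[OF g_linear] by simp
  then show False
    using g(2) by simp
qed

lemma hom_objectD:
  assumes "hom_object s f"
  shows "vector_space s" "linear_map s s f" "linear_map s s (inv f)"
    "\<And>x. f (inv f x) = x" "\<And>x. inv f (f x) = x"
  using assms linear_map_inv[of s f] linear_imp_linear_map[of s s f]
  by (simp_all add: hom_object_def bij_is_surj surj_f_inv_f bij_is_inj)

lemma bilinear_map_linear_map:
  assumes "bilinear_map sx sy sz f"
  shows "linear_map sx sz (\<lambda>x. f x y)" "linear_map sy sz (\<lambda>y. f x y)"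
  using assms by (auto simp: bilinear_map_def linear_imp_linear_map)

section \<open>Tensor equalities through multilinear forms\<close>

definition teval2 :: "('x \<Rightarrow> 'y \<Rightarrow> 'k::comm_monoid_add) \<Rightarrow> ('x \<times> 'y) list \<Rightarrow> 'k" where
  "teval2 B xs = sum_list (map (\<lambda>(x, y). B x y) xs)"

definition teval3 :: "('x \<Rightarrow> 'y \<Rightarrow> 'z \<Rightarrow> 'k::comm_monoid_add) \<Rightarrow> ('x \<times> 'y \<times> 'z) list \<Rightarrow> 'k" where
  "teval3 T xs = sum_list (map (\<lambda>(x, y, z). T x y z) xs)"

definition supp :: "('p \<Rightarrow> 'k::field) \<Rightarrow> 'p set" where
  "supp f = {p. f p \<noteq> 0}"

text \<open>On finitely supported functions, i.e. on the free vector space over \<open>'p\<close>, \<open>pairing B\<close> is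
  the linear functional extending \<open>B\<close>.\<close>

definition pairing :: "('p \<Rightarrow> 'k::field) \<Rightarrow> ('p \<Rightarrow> 'k) \<Rightarrow> 'k" where
  "pairing B f = (\<Sum>p\<in>supp f. f p * B p)"

lemma vector_space_fscale: "vector_space (fscale :: 'k::field \<Rightarrow> ('p \<Rightarrow> 'k) \<Rightarrow> _)"
  by unfold_locales (auto simp: fscale_def fun_eq_iff algebra_simps)

lemma pairing_eq_sum: "finite F \<Longrightarrow> supp f \<subseteq> F \<Longrightarrow> pairing B f = (\<Sum>p\<in>F. f p * B p)"
  unfolding pairing_def by (rule sum.mono_neutral_left) (auto simp: supp_def)

lemma supp_add: "supp (f + g) \<subseteq> supp f \<union> supp g"
  by (auto simp: supp_def)

lemma supp_diff: "supp (f - g) \<subseteq> supp f \<union> supp g"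
  by (auto simp: supp_def)

lemma supp_fscale: "supp (fscale c f) \<subseteq> supp f"
  by (auto simp: supp_def fscale_def)

lemma supp_zero [simp]: "supp 0 = {}" "supp (\<lambda>_. 0) = {}"
  by (auto simp: supp_def)

lemma finite_supp_add: "finite (supp f) \<Longrightarrow> finite (supp g) \<Longrightarrow> finite (supp (f + g))"
  by (meson finite_UnI finite_subset supp_add)

lemma finite_supp_diff: "finite (supp f) \<Longrightarrow> finite (supp g) \<Longrightarrow> finite (supp (f - g))"
  by (meson finite_UnI finite_subset supp_diff)

lemma finite_supp_fscale: "finite (supp f) \<Longrightarrow> finite (supp (fscale c f))"
  by (meson finite_subset supp_fscale)

lemma finite_supp_fdelta: "finite (supp (fdelta p :: _ \<Rightarrow> 'k::field))"
  by (rule finite_subset[of _ "{p}"]) (auto simp: supp_def fdelta_def)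

lemma pairing_add:
  assumes "finite (supp f)" "finite (supp g)"
  shows "pairing B (f + g) = pairing B f + pairing B g"
proof -
  let ?F = "supp f \<union> supp g"
  have "pairing B (f + g) = (\<Sum>p\<in>?F. (f + g) p * B p)"
    using assms supp_add[of f g] by (intro pairing_eq_sum) auto
  also have "\<dots> = (\<Sum>p\<in>?F. f p * B p) + (\<Sum>p\<in>?F. g p * B p)"
    by (simp add: distrib_right sum.distrib)
  also have "\<dots> = pairing B f + pairing B g"
    using assms pairing_eq_sum[of ?F f B] pairing_eq_sum[of ?F g B] by auto
  finally show ?thesis .
qed

lemma pairing_diff:
  assumes "finite (supp f)" "finite (supp g)"
  shows "pairing B (f - g) = pairing B f - pairing B g"
proof -
  let ?F = "supp f \<union> supp g"
  have "pairing B (f - g) = (\<Sum>p\<in>?F. (f - g) p * B p)"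
    using assms supp_diff[of f g] by (intro pairing_eq_sum) auto
  also have "\<dots> = (\<Sum>p\<in>?F. f p * B p) - (\<Sum>p\<in>?F. g p * B p)"
    by (simp add: left_diff_distrib sum_subtractf)
  also have "\<dots> = pairing B f - pairing B g"
    using assms pairing_eq_sum[of ?F f B] pairing_eq_sum[of ?F g B] by auto
  finally show ?thesis .
qed

lemma pairing_fscale: "finite (supp f) \<Longrightarrow> pairing B (fscale c f) = c * pairing B f"
  using supp_fscale[of c f]
  by (subst pairing_eq_sum[of "supp f"]) (auto simp: pairing_def fscale_def sum_distrib_left mult.assoc)

lemma pairing_fdelta: "pairing B (fdelta p) = B p"
  by (subst pairing_eq_sum[of "{p}"]) (auto simp: supp_def fdelta_def)

lemma pairing_zero [simp]: "pairing B 0 = 0" "pairing B (\<lambda>_. 0) = 0"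
  by (simp_all add: pairing_def)

lemma fsum_Nil: "fsum [] = (0 :: _ \<Rightarrow> 'k::field)"
  by (auto simp: fsum_def fun_eq_iff)

lemma fsum_Cons: "fsum (x # xs) = fdelta x + (fsum xs :: _ \<Rightarrow> 'k::field)"
  by (auto simp: fsum_def fdelta_def fun_eq_iff)

lemma finite_supp_fsum: "finite (supp (fsum xs :: _ \<Rightarrow> 'k::field))"
proof (induct xs)
  case (Cons x xs)
  then show ?case
    unfolding fsum_Cons by (intro finite_supp_add finite_supp_fdelta)
qed (simp add: fsum_Nil)

lemma pairing_fsum: "pairing B (fsum xs) = sum_list (map B xs)"
proof (induct xs)
  case (Cons x xs)
  have "pairing B (fsum (x # xs)) = pairing B (fdelta x) + pairing B (fsum xs)"
    unfolding fsum_Cons by (rule pairing_add[OF finite_supp_fdelta finite_supp_fsum])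
  then show ?case
    by (simp add: pairing_fdelta Cons.hyps)
qed (simp add: fsum_Nil)

lemma sum_fun_apply: "(\<Sum>p\<in>A. f p) q = (\<Sum>p\<in>A. f p q)"
  by (induct A rule: infinite_finite_induct) auto

lemma finite_supp_eq_sum_fdelta:
  assumes "finite (supp f)"
  shows "f = (\<Sum>p\<in>supp f. fscale (f p) (fdelta p :: _ \<Rightarrow> 'k::field))"
proof
  fix q
  have "(\<Sum>p\<in>supp f. fscale (f p) (fdelta p)) q = (\<Sum>p\<in>supp f. f p * fdelta p q)"
    by (simp add: fscale_def sum_fun_apply)
  also have "\<dots> = (\<Sum>p\<in>supp f. if p = q then f p else 0)"
    by (rule sum.cong) (auto simp: fdelta_def)
  also have "\<dots> = f q"
    using assms by (simp add: supp_def)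
  finally show "f q = (\<Sum>p\<in>supp f. fscale (f p) (fdelta p)) q" by simp
qed

lemma pairing_span_eq_0:
  fixes R :: "('p \<Rightarrow> 'k::field) set"
  assumes R: "\<forall>r\<in>R. finite (supp r)" and B: "\<forall>r\<in>R. pairing B r = 0"
    and v: "v \<in> module.span fscale R"
  shows "finite (supp v) \<and> pairing B v = 0"
proof -
  interpret vector_space "fscale :: 'k \<Rightarrow> ('p \<Rightarrow> 'k) \<Rightarrow> _"
    by (rule vector_space_fscale)
  from v show ?thesis
  proof (induct rule: span_induct_alt)
    case (step c x y)
    have x: "finite (supp x)" "pairing B x = 0"
      using R B step(1) by auto
    have "finite (supp (fscale c x + y))"
      using finite_supp_add[OF finite_supp_fscale[OF x(1)]] step(2) by blast
    moreover have "pairing B (fscale c x + y) = c * pairing B x + pairing B y"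
      using pairing_add[OF finite_supp_fscale[OF x(1)]] step(2) pairing_fscale[OF x(1)] by metis
    ultimately show ?case
      using x(2) step(2) by (intro conjI) (simp_all only: mult_zero_right add_0)
  qed simp
qed

lemma linear_eq_pairing:
  fixes g :: "('p \<Rightarrow> 'k::field) \<Rightarrow> 'k"
  assumes g: "Vector_Spaces.linear fscale (*) g" and f: "finite (supp f)"
  shows "g f = pairing (\<lambda>p. g (fdelta p)) f"
proof -
  interpret VK: vector_space_pair "fscale :: 'k \<Rightarrow> ('p \<Rightarrow> 'k) \<Rightarrow> _" "(*) :: 'k \<Rightarrow> 'k \<Rightarrow> 'k"
    by unfold_locales (auto simp: fscale_def fun_eq_iff algebra_simps)
  have "g f = g (\<Sum>p\<in>supp f. fscale (f p) (fdelta p))"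
    using finite_supp_eq_sum_fdelta[OF f] by simp
  also have "\<dots> = pairing (\<lambda>p. g (fdelta p)) f"
    unfolding VK.linear_sum[OF g] VK.linear_scale[OF g] pairing_def ..
  finally show ?thesis .
qed

text \<open>Otherwise a basis of the span of \<open>R\<close>, extended by \<open>v\<close>, yields a functional vanishing
  on \<open>R\<close> but not on \<open>v\<close>.\<close>

lemma in_span_if_pairing_eq_0:
  fixes R :: "('p \<Rightarrow> 'k::field) set"
  assumes R: "\<forall>r\<in>R. finite (supp r)" and v: "finite (supp v)"
    and H: "\<And>B. \<forall>r\<in>R. pairing B r = 0 \<Longrightarrow> pairing B v = (0::'k)"
  shows "v \<in> module.span fscale R"
proof (rule ccontr)
  assume nv: "v \<notin> module.span fscale R"
  interpret V: vector_space "fscale :: 'k \<Rightarrow> ('p \<Rightarrow> 'k) \<Rightarrow> _"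
    by (rule vector_space_fscale)
  interpret VK: vector_space_pair "fscale :: 'k \<Rightarrow> ('p \<Rightarrow> 'k) \<Rightarrow> _" "(*) :: 'k \<Rightarrow> 'k \<Rightarrow> 'k"
    by unfold_locales (auto simp: algebra_simps)
  obtain Bs where Bs: "Bs \<subseteq> V.span R" "V.independent Bs" "V.span R \<subseteq> V.span Bs"
    by (rule V.basis_exists)
  have span_Bs: "V.span Bs = V.span R"
    using V.span_mono[OF Bs(1)] Bs(3) unfolding V.span_span by blast
  have "V.independent (insert v Bs)"
    using nv Bs(2) by (intro V.independent_insertI) (simp_all add: span_Bs)
  then obtain g where g: "Vector_Spaces.linear fscale (*) g"
      "\<forall>x\<in>insert v Bs. g x = (if x = v then 1 else 0)"
    using VK.linear_independent_extend[of _ "\<lambda>x. if x = v then 1 else 0"] by blast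
  note g_pairing = linear_eq_pairing[OF g(1)]
  have "v \<notin> Bs"
    using nv Bs(1) by auto
  then have "\<forall>b\<in>Bs. g b = 0"
    using g(2) by auto
  then have g_span: "g x = 0" if "x \<in> V.span Bs" for x
    using VK.linear_eq_0_on_span[OF g(1)] that by blast
  have "\<forall>r\<in>R. pairing (\<lambda>p. g (fdelta p)) r = 0"
  proof
    fix r
    assume r: "r \<in> R"
    then have "g r = 0"
      using g_span span_Bs V.span_superset by blast
    then show "pairing (\<lambda>p. g (fdelta p)) r = 0"
      using g_pairing R r by simp
  qed
  then have "g v = 0"
    using H g_pairing[OF v] by simp
  then show False
    using g(2) by simp
qed

lemma span_diff_fsum_iff:
  fixes R :: "('p \<Rightarrow> 'k::field) set"
  assumes R: "\<forall>r\<in>R. finite (supp r)"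
  shows "fsum xs - fsum ys \<in> module.span fscale R \<longleftrightarrow>
    (\<forall>B. (\<forall>r\<in>R. pairing B r = 0) \<longrightarrow> sum_list (map B xs) = (sum_list (map B ys) :: 'k))"
    (is "?span \<longleftrightarrow> ?forms")
proof
  assume ?span
  show ?forms
  proof (intro allI impI)
    fix B :: "_ \<Rightarrow> 'k"
    assume "\<forall>r\<in>R. pairing B r = 0"
    then have "pairing B (fsum xs - fsum ys) = 0"
      using pairing_span_eq_0[OF R] \<open>?span\<close> by blast
    then show "sum_list (map B xs) = sum_list (map B ys)"
      by (simp add: pairing_diff finite_supp_fsum pairing_fsum)
  qed
next
  assume ?forms
  then show ?span
    by (intro in_span_if_pairing_eq_0[OF R])
      (auto simp: finite_supp_diff finite_supp_fsum pairing_diff pairing_fsum)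
qed

lemma pairing_fdelta_diff2: "pairing B (fdelta p - fdelta q - fdelta r) = B p - B q - (B r :: 'k::field)"
  by (simp add: pairing_diff finite_supp_diff finite_supp_fdelta pairing_fdelta)

lemma pairing_fdelta_fscale: "pairing B (fdelta p - fscale c (fdelta q)) = B p - c * (B q :: 'k::field)"
  by (simp add: pairing_diff finite_supp_fscale finite_supp_fdelta pairing_fdelta pairing_fscale)

lemma finite_supp_fdelta_diff2: "finite (supp (fdelta p - fdelta q - fdelta r :: _ \<Rightarrow> 'k::field))"
  by (intro finite_supp_diff finite_supp_fdelta)

lemma finite_supp_fdelta_fscale: "finite (supp (fdelta p - fscale c (fdelta q) :: _ \<Rightarrow> 'k::field))"
  by (intro finite_supp_diff finite_supp_fdelta finite_supp_fscale)

lemma finite_supp_rel2: "\<forall>r\<in>rel2 sx sy. finite (supp r)"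
  unfolding rel2_def by (auto intro: finite_supp_fdelta_diff2 finite_supp_fdelta_fscale)

lemma finite_supp_rel3: "\<forall>r\<in>rel3 sx sy sz. finite (supp r)"
  unfolding rel3_def by (auto intro: finite_supp_fdelta_diff2 finite_supp_fdelta_fscale)

lemma pairing_rel2_eq_0_iff:
  "(\<forall>r\<in>rel2 sx sy. pairing B r = 0) \<longleftrightarrow> bilinear_form sx sy (\<lambda>x y. B (x, y))"
proof
  assume H: "\<forall>r\<in>rel2 sx sy. pairing B r = 0"
  have "pairing B (fdelta (x + x', y) - fdelta (x, y) - fdelta (x', y)) = 0"
    "pairing B (fdelta (x, y + y') - fdelta (x, y) - fdelta (x, y')) = 0"
    "pairing B (fdelta (sx c x, y) - fscale c (fdelta (x, y))) = 0"
    "pairing B (fdelta (x, sy c y) - fscale c (fdelta (x, y))) = 0" for x x' y y' c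
    using H unfolding rel2_def ball_Un by blast+
  then have "B (x + x', y) = B (x, y) + B (x', y)" "B (x, y + y') = B (x, y) + B (x, y')"
    "B (sx c x, y) = c * B (x, y)" "B (x, sy c y) = c * B (x, y)" for x x' y y' c
    unfolding pairing_fdelta_diff2 pairing_fdelta_fscale by (simp_all add: diff_diff_eq)
  then show "bilinear_form sx sy (\<lambda>x y. B (x, y))"
    by (simp add: bilinear_form_def linear_form_def linear_map_def)
next
  assume "bilinear_form sx sy (\<lambda>x y. B (x, y))"
  then show "\<forall>r\<in>rel2 sx sy. pairing B r = 0"
    unfolding rel2_def bilinear_form_def linear_form_def linear_map_def
    by (auto simp: pairing_fdelta_diff2 pairing_fdelta_fscale)
qed

lemma pairing_rel3_eq_0_iff:
  "(\<forall>r\<in>rel3 sx sy sz. pairing B r = 0) \<longleftrightarrow> trilinear_form sx sy sz (\<lambda>x y z. B (x, y, z))"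
proof
  assume H: "\<forall>r\<in>rel3 sx sy sz. pairing B r = 0"
  have "pairing B (fdelta (x + x', y, z) - fdelta (x, y, z) - fdelta (x', y, z)) = 0"
    "pairing B (fdelta (x, y + y', z) - fdelta (x, y, z) - fdelta (x, y', z)) = 0"
    "pairing B (fdelta (x, y, z + z') - fdelta (x, y, z) - fdelta (x, y, z')) = 0"
    "pairing B (fdelta (sx c x, y, z) - fscale c (fdelta (x, y, z))) = 0"
    "pairing B (fdelta (x, sy c y, z) - fscale c (fdelta (x, y, z))) = 0"
    "pairing B (fdelta (x, y, sz c z) - fscale c (fdelta (x, y, z))) = 0" for x x' y y' z z' c
    using H unfolding rel3_def ball_Un by blast+
  then have "B (x + x', y, z) = B (x, y, z) + B (x', y, z)"
    "B (x, y + y', z) = B (x, y, z) + B (x, y', z)" "B (x, y, z + z') = B (x, y, z) + B (x, y, z')"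
    "B (sx c x, y, z) = c * B (x, y, z)" "B (x, sy c y, z) = c * B (x, y, z)"
    "B (x, y, sz c z) = c * B (x, y, z)" for x x' y y' z z' c
    unfolding pairing_fdelta_diff2 pairing_fdelta_fscale by (simp_all add: diff_diff_eq)
  then show "trilinear_form sx sy sz (\<lambda>x y z. B (x, y, z))"
    by (simp add: trilinear_form_def linear_form_def linear_map_def)
next
  assume "trilinear_form sx sy sz (\<lambda>x y z. B (x, y, z))"
  then show "\<forall>r\<in>rel3 sx sy sz. pairing B r = 0"
    unfolding rel3_def trilinear_form_def linear_form_def linear_map_def
    by (auto simp: pairing_fdelta_diff2 pairing_fdelta_fscale)
qed

lemma teq2_iff_teval2: "teq2 sx sy xs ys \<longleftrightarrow> (\<forall>B. bilinear_form sx sy B \<longrightarrow> teval2 B xs = teval2 B ys)"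
proof -
  have "teq2 sx sy xs ys \<longleftrightarrow>
      (\<forall>B. bilinear_form sx sy (\<lambda>x y. B (x, y)) \<longrightarrow> sum_list (map B xs) = sum_list (map B ys))"
    unfolding teq2_def span_diff_fsum_iff[OF finite_supp_rel2] pairing_rel2_eq_0_iff ..
  also have "\<dots> \<longleftrightarrow> (\<forall>B. bilinear_form sx sy B \<longrightarrow> teval2 B xs = teval2 B ys)"
  proof
    assume "\<forall>B. bilinear_form sx sy (\<lambda>x y. B (x, y)) \<longrightarrow> sum_list (map B xs) = sum_list (map B ys)"
    then show "\<forall>B. bilinear_form sx sy B \<longrightarrow> teval2 B xs = teval2 B ys"
      by (simp add: teval2_def)
  next
    assume R: "\<forall>B. bilinear_form sx sy B \<longrightarrow> teval2 B xs = teval2 B ys"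
    show "\<forall>B. bilinear_form sx sy (\<lambda>x y. B (x, y)) \<longrightarrow> sum_list (map B xs) = sum_list (map B ys)"
      using R[rule_format, of "\<lambda>x y. _ (x, y)"] by (simp add: teval2_def split_def)
  qed
  finally show ?thesis .
qed

lemma teq3_iff_teval3:
  "teq3 sx sy sz xs ys \<longleftrightarrow> (\<forall>T. trilinear_form sx sy sz T \<longrightarrow> teval3 T xs = teval3 T ys)"
proof -
  have "teq3 sx sy sz xs ys \<longleftrightarrow> (\<forall>B. trilinear_form sx sy sz (\<lambda>x y z. B (x, y, z)) \<longrightarrow>
      sum_list (map B xs) = sum_list (map B ys))"
    unfolding teq3_def span_diff_fsum_iff[OF finite_supp_rel3] pairing_rel3_eq_0_iff ..
  also have "\<dots> \<longleftrightarrow> (\<forall>T. trilinear_form sx sy sz T \<longrightarrow> teval3 T xs = teval3 T ys)"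
  proof
    assume "\<forall>B. trilinear_form sx sy sz (\<lambda>x y z. B (x, y, z)) \<longrightarrow>
      sum_list (map B xs) = sum_list (map B ys)"
    then show "\<forall>T. trilinear_form sx sy sz T \<longrightarrow> teval3 T xs = teval3 T ys"
      by (auto simp: teval3_def elim!: allE[of _ "\<lambda>(x, y, z). _ x y z"])
  next
    assume R: "\<forall>T. trilinear_form sx sy sz T \<longrightarrow> teval3 T xs = teval3 T ys"
    show "\<forall>B. trilinear_form sx sy sz (\<lambda>x y z. B (x, y, z)) \<longrightarrow>
      sum_list (map B xs) = sum_list (map B ys)"
      using R[rule_format, of "\<lambda>x y z. _ (x, y, z)"] by (simp add: teval3_def split_def)
  qed
  finally show ?thesis .
qed

lemma teq2D: "teq2 sx sy xs ys \<Longrightarrow> bilinear_form sx sy B \<Longrightarrow> teval2 B xs = teval2 B ys"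
  by (simp add: teq2_iff_teval2)

lemma teq2I: "(\<And>B. bilinear_form sx sy B \<Longrightarrow> teval2 B xs = teval2 B ys) \<Longrightarrow> teq2 sx sy xs ys"
  by (simp add: teq2_iff_teval2)

lemma teq3D: "teq3 sx sy sz xs ys \<Longrightarrow> trilinear_form sx sy sz T \<Longrightarrow> teval3 T xs = teval3 T ys"
  by (simp add: teq3_iff_teval3)

lemma teq3I:
  "(\<And>T. trilinear_form sx sy sz T \<Longrightarrow> teval3 T xs = teval3 T ys) \<Longrightarrow> teq3 sx sy sz xs ys"
  by (simp add: teq3_iff_teval3)

lemma teval2_Nil [simp]: "teval2 B [] = 0"
  by (simp add: teval2_def)

lemma teval2_Cons [simp]: "teval2 B ((x, y) # xs) = B x y + teval2 B xs"
  by (simp add: teval2_def)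

lemma teval2_append [simp]: "teval2 B (xs @ ys) = teval2 B xs + teval2 B ys"
  by (simp add: teval2_def)

lemma teval2_concat_map:
  "teval2 B (concat (map (\<lambda>(x, y). f x y) zs)) = teval2 (\<lambda>x y. teval2 B (f x y)) zs"
  by (induct zs) (auto simp: teval2_def)

lemma teval2_map:
  "teval2 B (map (\<lambda>(x, y). (f x y, g x y)) xs) = teval2 (\<lambda>x y. B (f x y) (g x y)) xs"
  by (induct xs) (auto simp: teval2_def)

lemma teval2_add: "teval2 (\<lambda>x y. F x y + G x y) xs = teval2 F xs + (teval2 G xs :: 'k::comm_monoid_add)"
  by (induct xs) (auto simp: teval2_def ac_simps)

lemma teval2_diff: "teval2 (\<lambda>x y. F x y - G x y) xs = teval2 F xs - (teval2 G xs :: 'k::ab_group_add)"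
  by (induct xs) (auto simp: teval2_def)

lemma teval2_cmult: "teval2 (\<lambda>x y. c * F x y) xs = c * (teval2 F xs :: 'k::field)"
  by (induct xs) (auto simp: teval2_def algebra_simps)

lemma teval2_cong: "(\<And>x y. (x, y) \<in> set xs \<Longrightarrow> F x y = G x y) \<Longrightarrow> teval2 F xs = teval2 G xs"
  by (induct xs) (auto simp: teval2_def)

lemma teval2_swap:
  "teval2 (\<lambda>x y. teval2 (\<lambda>u v. F x y u v) ys) xs = teval2 (\<lambda>u v. teval2 (\<lambda>x y. F x y u v) xs) ys"
proof (induct xs)
  case Nil
  then show ?case by (induct ys) auto
next
  case (Cons p xs)
  then show ?case by (cases p) (simp add: teval2_add)
qed

lemma teval2_tscale:
  assumes "\<And>y. linear_form sx (\<lambda>x. B x y)"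
  shows "teval2 B (tscale sx c xs) = c * teval2 B xs"
  by (induct xs) (auto simp: tscale_def linear_form_scale[OF assms] algebra_simps)

lemma teval2_tlmult:
  "teval2 B (tlmult mulH lact xs ys) = teval2 (\<lambda>h a. teval2 (\<lambda>h' w. B (mulH h h') (lact a w)) ys) xs"
  unfolding tlmult_def teval2_concat_map teval2_map ..

lemma teval2_trmult:
  "teval2 B (trmult mulH ract ys xs) = teval2 (\<lambda>h' w. teval2 (\<lambda>h a. B (mulH h' h) (ract w a)) xs) ys"
  unfolding trmult_def teval2_concat_map teval2_map ..

lemma teval2_tid_d: "teval2 B (tid_d d xs) = teval2 (\<lambda>h a. B h (d a)) xs"
  unfolding tid_d_def teval2_map ..

lemma teval3_concat_map:
  "teval3 T (concat (map (\<lambda>(x, y). f x y) zs)) = teval2 (\<lambda>x y. teval3 T (f x y)) zs"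
  by (induct zs) (auto simp: teval2_def teval3_def)

lemma teval3_map_left: "teval3 T (map (\<lambda>(u, v). (a, u, v)) xs) = teval2 (\<lambda>u v. T a u v) xs"
  by (induct xs) (auto simp: teval2_def teval3_def)

lemma teval3_map_right: "teval3 T (map (\<lambda>(u, v). (u, v, a)) xs) = teval2 (\<lambda>u v. T u v a) xs"
  by (induct xs) (auto simp: teval2_def teval3_def)

lemma linear_form_teval2:
  "(\<And>u v. linear_form s (\<lambda>x. F u v x)) \<Longrightarrow> linear_form s (\<lambda>x. teval2 (\<lambda>u v. F u v x) xs)"
  unfolding linear_form_def linear_map_def by (induct xs) (auto simp: algebra_simps)

lemma linear_form_sum_list_scale:
  "linear_form s l \<Longrightarrow> l (sum_list (map (\<lambda>(h, n). s (e h) n) xs)) = teval2 (\<lambda>h n. e h * l n) xs"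
  by (induct xs) (auto simp: linear_form_zero linear_form_add linear_form_scale)

lemma linear_form_teval2_tmorphism:
  assumes f: "tmorphism sm \<mu> sx \<xi> sy \<eta> f" and B: "bilinear_form sx sy B"
  shows "linear_form sm (\<lambda>m. teval2 B (f m))"
proof (rule linear_formI)
  fix x y c
  have "teq2 sx sy (f (x + y)) (f x @ f y)"
    using f unfolding tmorphism_def by blast
  from teq2D[OF this B] show "teval2 B (f (x + y)) = teval2 B (f x) + teval2 B (f y)"
    by simp
  have "teq2 sx sy (f (sm c x)) (tscale sx c (f x))"
    using f unfolding tmorphism_def by blast
  from teq2D[OF this B] show "teval2 B (f (sm c x)) = c * teval2 B (f x)"
    using teval2_tscale[OF bilinear_form_left[OF B]] by simp
qed

lemma linear_form_teval2_tmorphism_comp: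
  "tmorphism sm \<mu> sx \<xi> sy \<eta> f \<Longrightarrow> bilinear_form sx sy B \<Longrightarrow> linear_map s sm g \<Longrightarrow>
    linear_form s (\<lambda>m. teval2 B (f (g m)))"
  using linear_form_comp[OF linear_form_teval2_tmorphism] by blast

lemma teval2_tmorphism_struct:
  assumes "tmorphism sm \<mu> sx \<xi> sy \<eta> f" and "bilinear_form sx sy B"
  shows "teval2 B (f (\<mu> m)) = teval2 (\<lambda>x y. B (\<xi> x) (\<eta> y)) (f m)"
proof -
  have "teq2 sx sy (f (\<mu> m)) (map (\<lambda>(x, y). (\<xi> x, \<eta> y)) (f m))"
    using assms(1) unfolding tmorphism_def by blast
  from teq2D[OF this assms(2)] show ?thesis
    by (simp add: teval2_map)
qed

locale comodule_FODC =
  fixes sH :: "'k::field \<Rightarrow> 'h::ab_group_add \<Rightarrow> 'h" and \<beta> :: "'h \<Rightarrow> 'h"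
    and mulH :: "'h \<Rightarrow> 'h \<Rightarrow> 'h" and oneH :: 'h
    and \<Delta> :: "'h \<Rightarrow> ('h \<times> 'h) list" and \<epsilon> :: "'h \<Rightarrow> 'k"
    and sA :: "'k \<Rightarrow> 'a::ab_group_add \<Rightarrow> 'a" and \<alpha> :: "'a \<Rightarrow> 'a"
    and mulA :: "'a \<Rightarrow> 'a \<Rightarrow> 'a" and oneA :: 'a
    and \<phi>A :: "'a \<Rightarrow> ('h \<times> 'a) list"
    and sG :: "'k \<Rightarrow> 'g::ab_group_add \<Rightarrow> 'g" and \<gamma> :: "'g \<Rightarrow> 'g"
    and lact :: "'a \<Rightarrow> 'g \<Rightarrow> 'g" and ract :: "'g \<Rightarrow> 'a \<Rightarrow> 'g" and d :: "'a \<Rightarrow> 'g"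
  assumes H: "hom_bialgebra sH \<beta> mulH oneH \<Delta> \<epsilon>"
    and A: "hom_comodule_algebra sH \<beta> mulH oneH \<Delta> \<epsilon> sA \<alpha> mulA oneA \<phi>A"
    and G: "hom_FODC sA \<alpha> mulA oneA sG \<gamma> lact ract d"
begin

lemma hom_algebra_H: "hom_algebra sH \<beta> mulH oneH"
  and hom_coalgebra_H: "hom_coalgebra sH \<beta> \<Delta> \<epsilon>"
  and hom_algebra_A: "hom_algebra sA \<alpha> mulA oneA"
  and hom_comodule_A: "hom_comodule sH \<beta> \<Delta> \<epsilon> sA \<alpha> \<phi>A"
  and hom_bimodule_\<Gamma>: "hom_bimodule sA \<alpha> mulA oneA sG \<gamma> lact ract"
  using H A G by (simp_all add: hom_bialgebra_def hom_comodule_algebra_def hom_FODC_def)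

lemma hom_object_H: "hom_object sH \<beta>"
  and hom_object_A: "hom_object sA \<alpha>"
  and hom_object_\<Gamma>: "hom_object sG \<gamma>"
  using hom_algebra_H hom_algebra_A hom_bimodule_\<Gamma> by (simp_all add: hom_algebra_def hom_bimodule_def)

lemmas linear_\<beta> = hom_objectD(2)[OF hom_object_H]
lemmas linear_inv_\<beta> = hom_objectD(3)[OF hom_object_H]
lemmas \<beta>_inv = hom_objectD(4)[OF hom_object_H]
lemmas inv_\<beta> = hom_objectD(5)[OF hom_object_H]
lemmas linear_\<alpha> = hom_objectD(2)[OF hom_object_A]
lemmas linear_inv_\<alpha> = hom_objectD(3)[OF hom_object_A]
lemmas \<alpha>_inv = hom_objectD(4)[OF hom_object_A]
lemmas inv_\<alpha> = hom_objectD(5)[OF hom_object_A]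
lemmas vector_space_\<Gamma> = hom_objectD(1)[OF hom_object_\<Gamma>]
lemmas linear_\<gamma> = hom_objectD(2)[OF hom_object_\<Gamma>]
lemmas linear_inv_\<gamma> = hom_objectD(3)[OF hom_object_\<Gamma>]
lemmas \<gamma>_inv = hom_objectD(4)[OF hom_object_\<Gamma>]
lemmas inv_\<gamma> = hom_objectD(5)[OF hom_object_\<Gamma>]

lemma linear_mulH: "linear_map sH sH (\<lambda>h. mulH h k)" "linear_map sH sH (\<lambda>h. mulH k h)"
  using hom_algebra_H bilinear_map_linear_map by (auto simp: hom_algebra_def)

lemma \<beta>_mult: "\<beta> (mulH a b) = mulH (\<beta> a) (\<beta> b)"
  and mulH_hom_assoc: "mulH (\<beta> a) (mulH b c) = mulH (mulH a b) (\<beta> c)"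
  and mulH_oneH: "mulH oneH a = \<beta> a" "mulH a oneH = \<beta> a"
  using hom_algebra_H by (auto simp: hom_algebra_def)

lemma linear_mulA: "linear_map sA sA (\<lambda>h. mulA h k)" "linear_map sA sA (\<lambda>h. mulA k h)"
  using hom_algebra_A bilinear_map_linear_map by (auto simp: hom_algebra_def)

lemma tmorphism_\<Delta>: "tmorphism sH \<beta> sH \<beta> sH \<beta> \<Delta>"
  and linear_\<epsilon>: "linear_form sH \<epsilon>"
  using hom_coalgebra_H by (auto simp: hom_coalgebra_def linear_form_def intro: linear_imp_linear_map)

lemma \<Delta>_mult: "teq2 sH sH (\<Delta> (mulH a b))
        (concat (map (\<lambda>(x, y). map (\<lambda>(x', y'). (mulH x x', mulH y y')) (\<Delta> b)) (\<Delta> a)))"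
  and \<epsilon>_mult: "\<epsilon> (mulH a b) = \<epsilon> a * \<epsilon> b"
  using H by (auto simp: hom_bialgebra_def)

lemma tmorphism_\<phi>A: "tmorphism sA \<alpha> sH \<beta> sA \<alpha> \<phi>A"
  and \<phi>A_coassoc: "teq3 sH sH sA
        (concat (map (\<lambda>(h, n). map (\<lambda>(u, v). (inv \<beta> h, u, v)) (\<phi>A n)) (\<phi>A m)))
        (concat (map (\<lambda>(h, n). map (\<lambda>(u, v). (u, v, inv \<alpha> n)) (\<Delta> h)) (\<phi>A m)))"
  and \<phi>A_counit: "sum_list (map (\<lambda>(h, n). sA (\<epsilon> h) n) (\<phi>A m)) = inv \<alpha> m"
  using hom_comodule_A by (auto simp: hom_comodule_def)

lemma \<phi>A_mult: "teq2 sH sA (\<phi>A (mulA a b))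
        (concat (map (\<lambda>(h, x). map (\<lambda>(h', y). (mulH h h', mulA x y)) (\<phi>A b)) (\<phi>A a)))"
  and \<phi>A_one: "teq2 sH sA (\<phi>A oneA) [(oneH, oneA)]"
  using A by (auto simp: hom_comodule_algebra_def)

lemma linear_lact: "linear_map sA sG (\<lambda>a. lact a w)" "linear_map sG sG (\<lambda>w. lact a w)"
  and linear_ract: "linear_map sG sG (\<lambda>w. ract w a)" "linear_map sA sG (\<lambda>a. ract w a)"
  using hom_bimodule_\<Gamma> bilinear_map_linear_map by (auto simp: hom_bimodule_def)

lemma \<gamma>_lact: "\<gamma> (lact a m) = lact (\<alpha> a) (\<gamma> m)"
  and lact_hom_assoc: "lact (\<alpha> a) (lact b m) = lact (mulA a b) (\<gamma> m)"
  and lact_oneA: "lact oneA m = \<gamma> m"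
  and ract_oneA: "ract m oneA = \<gamma> m"
  and lact_ract_hom_assoc: "lact (\<alpha> a) (ract m b) = ract (lact a m) (\<alpha> b)"
  using hom_bimodule_\<Gamma> by (auto simp: hom_bimodule_def)

lemma linear_d: "linear_map sA sG d"
  and leibniz: "d (mulA a b) = lact a (d b) + ract (d a) b"
  and d_\<alpha>: "d (\<alpha> a) = \<gamma> (d a)"
  and span_generators: "module.span sG {ract (lact a (d b)) c | a b c. True} = UNIV"
  using G by (auto simp: hom_FODC_def linear_imp_linear_map)

lemma inv_\<beta>_mult: "inv \<beta> (mulH a b) = mulH (inv \<beta> a) (inv \<beta> b)"
  by (metis \<beta>_mult \<beta>_inv inv_\<beta>)

lemma inv_\<gamma>_generator: "inv \<gamma> (lact a (d b)) = lact (inv \<alpha> a) (d (inv \<alpha> b))"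
  by (metis \<gamma>_lact d_\<alpha> \<alpha>_inv inv_\<gamma>)

lemmas linear_map_intros = linear_map_id
  linear_map_comp[OF _ linear_mulH(1)] linear_map_comp[OF _ linear_mulH(2)]
  linear_map_comp[OF _ linear_mulA(1)] linear_map_comp[OF _ linear_mulA(2)]
  linear_map_comp[OF _ linear_\<beta>] linear_map_comp[OF _ linear_inv_\<beta>]
  linear_map_comp[OF _ linear_\<alpha>] linear_map_comp[OF _ linear_inv_\<alpha>]
  linear_map_comp[OF _ linear_\<gamma>] linear_map_comp[OF _ linear_inv_\<gamma>]
  linear_map_comp[OF _ linear_lact(1)] linear_map_comp[OF _ linear_lact(2)]
  linear_map_comp[OF _ linear_ract(1)] linear_map_comp[OF _ linear_ract(2)]
  linear_map_comp[OF _ linear_d]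

lemmas linearity = linear_form_teval2 linear_form_cmult linear_form_multc linear_form_comp[OF linear_\<epsilon>]
  linear_form_teval2_tmorphism_comp[OF tmorphism_\<phi>A] linear_map_intros

lemma linear_form_teval2_\<phi>A: "bilinear_form sH sA B \<Longrightarrow> linear_form sA (\<lambda>a. teval2 B (\<phi>A a))"
  by (rule linear_form_teval2_tmorphism[OF tmorphism_\<phi>A])

lemma teval2_\<phi>A_\<alpha>:
  "bilinear_form sH sA B \<Longrightarrow> teval2 B (\<phi>A (\<alpha> a)) = teval2 (\<lambda>h x. B (\<beta> h) (\<alpha> x)) (\<phi>A a)"
  by (rule teval2_tmorphism_struct[OF tmorphism_\<phi>A])

lemma teval2_\<phi>A_inv_\<alpha>:
  assumes b: "bilinear_form sH sA B"
  shows "teval2 B (\<phi>A (inv \<alpha> a)) = teval2 (\<lambda>h x. B (inv \<beta> h) (inv \<alpha> x)) (\<phi>A a)"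
proof -
  have "bilinear_form sH sA (\<lambda>h x. B (inv \<beta> h) (inv \<alpha> x))"
    by (intro bilinear_formI linearity bilinear_form_comp[OF b])
  from teval2_\<phi>A_\<alpha>[OF this, of "inv \<alpha> a"] show ?thesis
    by (simp add: \<alpha>_inv inv_\<beta> inv_\<alpha>)
qed

lemma teval2_\<phi>A_mult:
  "bilinear_form sH sA B \<Longrightarrow> teval2 B (\<phi>A (mulA a b)) =
    teval2 (\<lambda>h x. teval2 (\<lambda>h' y. B (mulH h h') (mulA x y)) (\<phi>A b)) (\<phi>A a)"
  using teq2D[OF \<phi>A_mult] by (simp add: teval2_concat_map teval2_map)

lemma teval2_\<phi>A_one: "bilinear_form sH sA B \<Longrightarrow> teval2 B (\<phi>A oneA) = B oneH oneA"
  using teq2D[OF \<phi>A_one] by simp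

lemma teval2_\<phi>A_coassoc:
  "trilinear_form sH sH sA T \<Longrightarrow>
    teval2 (\<lambda>h n. teval2 (\<lambda>u v. T (inv \<beta> h) u v) (\<phi>A n)) (\<phi>A m) =
    teval2 (\<lambda>h n. teval2 (\<lambda>u v. T u v (inv \<alpha> n)) (\<Delta> h)) (\<phi>A m)"
  using teq3D[OF \<phi>A_coassoc, unfolded teval3_concat_map teval3_map_left teval3_map_right] by simp

lemma teval2_\<Delta>_mult:
  "bilinear_form sH sH B \<Longrightarrow> teval2 B (\<Delta> (mulH a b)) =
    teval2 (\<lambda>x y. teval2 (\<lambda>x' y'. B (mulH x x') (mulH y y')) (\<Delta> b)) (\<Delta> a)"
  using teq2D[OF \<Delta>_mult] by (simp add: teval2_concat_map teval2_map)

definition dsum :: "('a \<times> 'a) list \<Rightarrow> 'g" where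
  "dsum ps = sum_list (map (\<lambda>(a, b). lact a (d b)) ps)"

lemma dsum_Nil [simp]: "dsum [] = 0"
  and dsum_Cons [simp]: "dsum ((a, b) # ps) = lact a (d b) + dsum ps"
  and dsum_append [simp]: "dsum (ps @ qs) = dsum ps + dsum qs"
  by (simp_all add: dsum_def)

lemma scale_dsum: "sG c (dsum ps) = dsum (map (\<lambda>(a, b). (sA c a, b)) ps)"
proof -
  interpret vector_space sG
    by (rule vector_space_\<Gamma>)
  show ?thesis
    by (induct ps) (auto simp: scale_right_distrib linear_map_scale[OF linear_lact(1)])
qed

lemma \<gamma>_dsum: "\<gamma> (dsum ps) = dsum (map (\<lambda>(a, b). (\<alpha> a, \<alpha> b)) ps)"
  by (induct ps) (auto simp: linear_map_add[OF linear_\<gamma>] linear_map_zero[OF linear_\<gamma>] \<gamma>_lact d_\<alpha>)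

lemma ract_generator:
  "ract (lact a (d b)) c = lact (\<alpha> a) (d (mulA b (inv \<alpha> c))) - lact (mulA a b) (d c)"
proof -
  have "ract (lact a (d b)) c = lact (\<alpha> a) (ract (d b) (inv \<alpha> c))"
    by (simp add: lact_ract_hom_assoc \<alpha>_inv)
  also have "ract (d b) (inv \<alpha> c) = d (mulA b (inv \<alpha> c)) - lact b (d (inv \<alpha> c))"
    by (simp add: leibniz)
  also have "lact (\<alpha> a) (d (mulA b (inv \<alpha> c)) - lact b (d (inv \<alpha> c))) =
      lact (\<alpha> a) (d (mulA b (inv \<alpha> c))) - lact (mulA a b) (d c)"
    by (simp add: linear_map_diff[OF linear_lact(2)] lact_hom_assoc d_\<alpha>[symmetric] \<alpha>_inv)
  finally show ?thesis .
qed

lemma subspace_range_dsum: "module.subspace sG (range dsum)"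
proof -
  interpret vector_space sG
    by (rule vector_space_\<Gamma>)
  show ?thesis
    unfolding subspace_def
  proof (intro conjI ballI allI)
    show "0 \<in> range dsum"
      using dsum_Nil by (metis rangeI)
  next
    fix x y
    assume "x \<in> range dsum" "y \<in> range dsum"
    then obtain ps qs where "x = dsum ps" "y = dsum qs"
      by blast
    then show "x + y \<in> range dsum"
      using dsum_append by (metis rangeI)
  next
    fix c x
    assume "x \<in> range dsum"
    then obtain ps where "x = dsum ps"
      by blast
    then show "sG c x \<in> range dsum"
      using scale_dsum by (metis rangeI)
  qed
qed

lemma ex_dsum_eq: "\<exists>ps. \<omega> = dsum ps"
proof -
  interpret vector_space sG
    by (rule vector_space_\<Gamma>)
  have "{ract (lact a (d b)) c | a b c. True} \<subseteq> range dsum"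
  proof clarify
    fix a b c
    have "lact (sA (-1) (mulA a b)) (d c) = - lact (mulA a b) (d c)"
      using linear_map_scale[OF linear_lact(1), of "-1" "mulA a b" "d c"] by simp
    then have "ract (lact a (d b)) c = dsum [(\<alpha> a, mulA b (inv \<alpha> c)), (sA (-1) (mulA a b), c)]"
      by (simp add: ract_generator)
    then show "ract (lact a (d b)) c \<in> range dsum"
      by (metis rangeI)
  qed
  then have "UNIV \<subseteq> range dsum"
    using span_minimal[OF _ subspace_range_dsum] span_generators by blast
  then show ?thesis
    by blast
qed

lemma linear_forms_eq_on_generators:
  assumes f: "linear_form sG f" and g: "linear_form sG g"
    and fg: "\<And>a b. f (lact a (d b)) = g (lact a (d b))"
  shows "f \<omega> = g \<omega>"
proof -
  obtain ps where "\<omega> = dsum ps"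
    using ex_dsum_eq by blast
  moreover have "f (dsum ps) = g (dsum ps)"
    by (induct ps) (auto simp: linear_form_zero[OF f] linear_form_zero[OF g]
        linear_form_add[OF f] linear_form_add[OF g] fg)
  ultimately show ?thesis
    by simp
qed

subsection \<open>Conditions (2) and (3)\<close>

definition gen_value :: "('h \<Rightarrow> 'g \<Rightarrow> 'k) \<Rightarrow> 'a \<Rightarrow> 'a \<Rightarrow> 'k" where
  "gen_value B a b = teval2 (\<lambda>h x. teval2 (\<lambda>h' y. B (mulH h h') (lact x (d y))) (\<phi>A b)) (\<phi>A a)"

lemma teval2_gen_image:
  "teval2 B (tlmult mulH lact (\<phi>A a) (tid_d d (\<phi>A b))) = gen_value B a b"
  by (simp add: gen_value_def teval2_tlmult teval2_tid_d)

lemma linear_form_gen_value: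
  assumes b: "bilinear_form sH sG B"
  shows "linear_form sA (\<lambda>a. gen_value B a c)"
  unfolding gen_value_def
  by (intro linear_form_teval2_\<phi>A bilinear_formI linearity bilinear_form_comp[OF b])

lemma gen_value_\<alpha>:
  assumes b: "bilinear_form sH sG B"
  shows "gen_value B (\<alpha> a) (\<alpha> c) = gen_value (\<lambda>h w. B (\<beta> h) (\<gamma> w)) a c"
proof -
  have "gen_value B (\<alpha> a) (\<alpha> c) =
    teval2 (\<lambda>h x. teval2 (\<lambda>h' y. B (mulH (\<beta> h) h') (lact (\<alpha> x) (d y))) (\<phi>A (\<alpha> c))) (\<phi>A a)"
    unfolding gen_value_def by (rule teval2_\<phi>A_\<alpha>) (intro bilinear_formI linearity bilinear_form_comp[OF b])
  also have "\<dots> = teval2 (\<lambda>h x. teval2 (\<lambda>h' y.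
      B (mulH (\<beta> h) (\<beta> h')) (lact (\<alpha> x) (d (\<alpha> y)))) (\<phi>A c)) (\<phi>A a)"
    by (intro teval2_cong teval2_\<phi>A_\<alpha>) (intro bilinear_formI linearity bilinear_form_comp[OF b])
  also have "\<dots> = gen_value (\<lambda>h w. B (\<beta> h) (\<gamma> w)) a c"
    unfolding gen_value_def by (simp add: \<beta>_mult \<gamma>_lact d_\<alpha>)
  finally show ?thesis .
qed

lemma teval2_dsum: "linear_form sG f \<Longrightarrow> teval2 (\<lambda>a b. f (lact a (d b))) ps = f (dsum ps)"
  by (induct ps) (auto simp: linear_form_zero linear_form_add)

abbreviation coacts_on_generators :: "('g \<Rightarrow> ('h \<times> 'g) list) \<Rightarrow> bool" where
  "coacts_on_generators \<phi> \<equiv> tmorphism sG \<gamma> sH \<beta> sG \<gamma> \<phi> \<and>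
     (\<forall>a b. teq2 sH sG (\<phi> (lact a (d b))) (tlmult mulH lact (\<phi>A a) (tid_d d (\<phi>A b))))"

definition dsum_image :: "('a \<times> 'a) list \<Rightarrow> ('h \<times> 'g) list" where
  "dsum_image ps = concat (map (\<lambda>(a, b). tlmult mulH lact (\<phi>A a) (tid_d d (\<phi>A b))) ps)"

definition respects_relations :: bool where
  "respects_relations \<longleftrightarrow> (\<forall>ps. dsum ps = 0 \<longrightarrow> teq2 sH sG (dsum_image ps) [])"

lemma teval2_dsum_image: "teval2 B (dsum_image ps) = teval2 (gen_value B) ps"
  unfolding dsum_image_def teval2_concat_map teval2_gen_image ..

lemma coacts_on_generators_respects_relations:
  assumes \<phi>: "coacts_on_generators \<phi>"
  shows respects_relations
  unfolding respects_relations_def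
proof (intro allI impI teq2I)
  fix ps :: "('a \<times> 'a) list" and B
  assume "dsum ps = 0" and b: "bilinear_form sH sG B"
  have lin: "linear_form sG (\<lambda>m. teval2 B (\<phi> m))"
    using linear_form_teval2_tmorphism \<phi> b by blast
  have "teval2 B (dsum_image ps) = teval2 (\<lambda>a b. teval2 B (\<phi> (lact a (d b)))) ps"
    unfolding dsum_image_def teval2_concat_map using teq2D[OF \<phi>[THEN conjunct2, rule_format] b]
    by simp
  also have "\<dots> = 0"
    using teval2_dsum[OF lin] \<open>dsum ps = 0\<close> linear_form_zero[OF lin] by simp
  finally show "teval2 B (dsum_image ps) = teval2 B []"
    by simp
qed

definition dsum_rep :: "'g \<Rightarrow> ('a \<times> 'a) list" where
  "dsum_rep \<omega> = (SOME ps. \<omega> = dsum ps)"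

lemma dsum_dsum_rep: "dsum (dsum_rep \<omega>) = \<omega>"
  unfolding dsum_rep_def using someI_ex[OF ex_dsum_eq] by metis

text \<open>By (3), the formula of (2) evaluated on a representation of an element as a sum of
  generators does not depend on the representation.\<close>

lemma teval2_dsum_image_cong:
  assumes respects_relations and eq: "dsum ps = dsum qs" and b: "bilinear_form sH sG B"
  shows "teval2 (gen_value B) ps = teval2 (gen_value B) qs"
proof -
  interpret V: vector_space sG
    by (rule vector_space_\<Gamma>)
  let ?neg_qs = "map (\<lambda>(a, b). (sA (-1) a, b)) qs"
  have "dsum (ps @ ?neg_qs) = 0"
    using eq scale_dsum[of "-1" qs, symmetric] by simp
  then have "teq2 sH sG (dsum_image (ps @ ?neg_qs)) []"
    using \<open>respects_relations\<close> unfolding respects_relations_def by blast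
  from teq2D[OF this b] have "teval2 (gen_value B) ps + teval2 (gen_value B) ?neg_qs = 0"
    by (simp add: teval2_dsum_image)
  moreover have "teval2 (gen_value B) ?neg_qs = - teval2 (gen_value B) qs"
    using linear_form_scale[OF linear_form_gen_value[OF b]] teval2_cmult[of "-1" "gen_value B" qs]
    by (simp add: teval2_map)
  ultimately show ?thesis
    by (simp add: add_eq_0_iff)
qed

lemma dsum_image_dsum_rep_tmorphism:
  assumes respects_relations
  shows "tmorphism sG \<gamma> sH \<beta> sG \<gamma> (\<lambda>\<omega>. dsum_image (dsum_rep \<omega>))"
  unfolding tmorphism_def
proof (intro conjI allI teq2I)
  fix m n B
  assume b: "bilinear_form sH sG B"
  have "teval2 (gen_value B) (dsum_rep (m + n)) = teval2 (gen_value B) (dsum_rep m @ dsum_rep n)"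
    by (rule teval2_dsum_image_cong[OF assms _ b]) (simp add: dsum_dsum_rep)
  then show "teval2 B (dsum_image (dsum_rep (m + n))) =
      teval2 B (dsum_image (dsum_rep m) @ dsum_image (dsum_rep n))"
    by (simp add: teval2_dsum_image)
next
  fix c m B
  assume b: "bilinear_form sH sG B"
  have "teval2 (gen_value B) (dsum_rep (sG c m)) =
      teval2 (gen_value B) (map (\<lambda>(a, b). (sA c a, b)) (dsum_rep m))"
    by (rule teval2_dsum_image_cong[OF assms _ b]) (simp add: dsum_dsum_rep scale_dsum[symmetric])
  also have "\<dots> = c * teval2 (gen_value B) (dsum_rep m)"
    using linear_form_scale[OF linear_form_gen_value[OF b]] by (simp add: teval2_map teval2_cmult)
  finally show "teval2 B (dsum_image (dsum_rep (sG c m))) =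
      teval2 B (tscale sH c (dsum_image (dsum_rep m)))"
    by (simp add: teval2_dsum_image teval2_tscale[OF bilinear_form_left[OF b]])
next
  fix m B
  assume b: "bilinear_form sH sG B"
  have "teval2 (gen_value B) (dsum_rep (\<gamma> m)) =
      teval2 (gen_value B) (map (\<lambda>(a, b). (\<alpha> a, \<alpha> b)) (dsum_rep m))"
    by (rule teval2_dsum_image_cong[OF assms _ b]) (simp add: dsum_dsum_rep \<gamma>_dsum[symmetric])
  also have "\<dots> = teval2 (gen_value (\<lambda>h w. B (\<beta> h) (\<gamma> w))) (dsum_rep m)"
    by (simp add: teval2_map gen_value_\<alpha>[OF b])
  finally show "teval2 B (dsum_image (dsum_rep (\<gamma> m))) =
      teval2 B (map (\<lambda>(x, y). (\<beta> x, \<gamma> y)) (dsum_image (dsum_rep m)))"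
    by (simp add: teval2_dsum_image teval2_map)
qed

lemma respects_relations_imp_coacts_on_generators:
  assumes respects_relations
  shows "\<exists>\<phi>. coacts_on_generators \<phi>"
proof (intro exI conjI allI)
  show "tmorphism sG \<gamma> sH \<beta> sG \<gamma> (\<lambda>\<omega>. dsum_image (dsum_rep \<omega>))"
    by (rule dsum_image_dsum_rep_tmorphism[OF assms])
  fix a b
  show "teq2 sH sG (dsum_image (dsum_rep (lact a (d b)))) (tlmult mulH lact (\<phi>A a) (tid_d d (\<phi>A b)))"
  proof (rule teq2I)
    fix B
    assume "bilinear_form sH sG B"
    then have "teval2 (gen_value B) (dsum_rep (lact a (d b))) = teval2 (gen_value B) [(a, b)]"
      by (intro teval2_dsum_image_cong[OF assms]) (simp_all add: dsum_dsum_rep)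
    then show "teval2 B (dsum_image (dsum_rep (lact a (d b)))) =
        teval2 B (tlmult mulH lact (\<phi>A a) (tid_d d (\<phi>A b)))"
      by (simp add: teval2_dsum_image teval2_gen_image)
  qed
qed

subsection \<open>Left covariance implies condition (2)\<close>

lemma teval2_trmult_\<phi>A_one:
  assumes \<phi>: "tmorphism sG \<gamma> sH \<beta> sG \<gamma> \<phi>" and b: "bilinear_form sH sG B"
  shows "teval2 B (trmult mulH ract (\<phi> \<omega>) (\<phi>A oneA)) = teval2 B (\<phi> (\<gamma> \<omega>))"
proof -
  have "teval2 B (trmult mulH ract (\<phi> \<omega>) (\<phi>A oneA)) =
      teval2 (\<lambda>h w. B (mulH h oneH) (ract w oneA)) (\<phi> \<omega>)"
    unfolding teval2_trmult
    by (rule teval2_cong, rule teval2_\<phi>A_one) (intro bilinear_formI linearity bilinear_form_comp[OF b])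
  also have "\<dots> = teval2 (\<lambda>h w. B (\<beta> h) (\<gamma> w)) (\<phi> \<omega>)"
    by (simp add: mulH_oneH ract_oneA)
  also have "\<dots> = teval2 B (\<phi> (\<gamma> \<omega>))"
    by (rule teval2_tmorphism_struct[OF \<phi> b, symmetric])
  finally show ?thesis .
qed

text \<open>A left covariant coaction satisfies (2) because \<open>a\<cdot>db = \<alpha>(\<alpha>\<^sup>-\<^sup>1(a))\<cdot>(\<gamma>\<^sup>-\<^sup>1(db)\<cdot>1)\<close>.\<close>

lemma left_covariant_imp_coacts_on_generators:
  assumes "left_covariant sH \<beta> mulH \<Delta> \<epsilon> \<alpha> \<phi>A sG \<gamma> lact ract d"
  shows "\<exists>\<phi>. coacts_on_generators \<phi>"
proof -
  obtain \<phi> where "hom_comodule sH \<beta> \<Delta> \<epsilon> sG \<gamma> \<phi>"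
    and cov: "\<forall>a b \<omega>. teq2 sH sG (\<phi> (lact (\<alpha> a) (ract \<omega> b)))
        (tlmult mulH lact (\<phi>A (\<alpha> a)) (trmult mulH ract (\<phi> \<omega>) (\<phi>A b)))"
    and cov_d: "\<forall>a. teq2 sH sG (\<phi> (d a)) (tid_d d (\<phi>A a))"
    using assms unfolding left_covariant_def by blast
  then have \<phi>: "tmorphism sG \<gamma> sH \<beta> sG \<gamma> \<phi>"
    by (simp add: hom_comodule_def)
  have "teq2 sH sG (\<phi> (lact a (d b))) (tlmult mulH lact (\<phi>A a) (tid_d d (\<phi>A b)))" for a b
  proof (rule teq2I)
    fix B
    assume b: "bilinear_form sH sG B"
    let ?\<omega> = "inv \<gamma> (d b)"
    have "teval2 B (\<phi> (lact a (d b))) = teval2 B (\<phi> (lact (\<alpha> (inv \<alpha> a)) (ract ?\<omega> oneA)))"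
      by (simp add: ract_oneA \<gamma>_inv \<alpha>_inv)
    also have "\<dots> = teval2 B (tlmult mulH lact (\<phi>A (\<alpha> (inv \<alpha> a)))
        (trmult mulH ract (\<phi> ?\<omega>) (\<phi>A oneA)))"
      by (rule teq2D[OF cov[rule_format] b])
    also have "\<dots> = teval2 (\<lambda>h x. teval2 (\<lambda>h' w. B (mulH h h') (lact x w)) (\<phi> (d b))) (\<phi>A a)"
      unfolding teval2_tlmult \<alpha>_inv
      by (intro teval2_cong, subst teval2_trmult_\<phi>A_one[OF \<phi>])
        (intro bilinear_formI linearity bilinear_form_comp[OF b], simp add: \<gamma>_inv)
    also have "\<dots> = teval2 B (tlmult mulH lact (\<phi>A a) (tid_d d (\<phi>A b)))"
      unfolding teval2_tlmult
      by (intro teval2_cong teq2D[OF cov_d[rule_format]])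
        (intro bilinear_formI linearity bilinear_form_comp[OF b])
    finally show "teval2 B (\<phi> (lact a (d b))) = teval2 B (tlmult mulH lact (\<phi>A a) (tid_d d (\<phi>A b)))" .
  qed
  with \<phi> show ?thesis
    by blast
qed

end

section \<open>From condition (2) to left covariance\<close>

locale generator_coaction = comodule_FODC +
  fixes \<phi>
  assumes tmorphism_\<phi>: "tmorphism sG \<gamma> sH \<beta> sG \<gamma> \<phi>"
    and \<phi>_generator:
      "\<forall>a b. teq2 sH sG (\<phi> (lact a (d b))) (tlmult mulH lact (\<phi>A a) (tid_d d (\<phi>A b)))"
begin

lemma teval2_\<phi>_generator: "bilinear_form sH sG B \<Longrightarrow> teval2 B (\<phi> (lact a (d b))) = gen_value B a b"
  using teq2D[OF \<phi>_generator[rule_format]] teval2_gen_image by metis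

lemmas linear_form_teval2_\<phi> = linear_form_teval2_tmorphism[OF tmorphism_\<phi>]
lemmas linear_form_teval2_\<phi>_comp = linear_form_teval2_tmorphism_comp[OF tmorphism_\<phi>]

text \<open>Both sides are linear in \<open>\<omega>\<close>, so it suffices to take \<open>\<omega> = a'\<cdot>db'\<close>, where
  \<open>a\<cdot>(a'\<cdot>db') = (\<alpha>\<^sup>-\<^sup>1(a) a')\<cdot>d(\<alpha>(b'))\<close> and \<open>\<phi>\<^sub>A\<close> is multiplicative.\<close>

lemma teval2_\<phi>_lact:
  assumes b: "bilinear_form sH sG B"
  shows "teval2 B (\<phi> (lact a \<omega>)) =
    teval2 (\<lambda>h x. teval2 (\<lambda>h' w. B (mulH h h') (lact x w)) (\<phi> \<omega>)) (\<phi>A a)"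
proof (rule linear_forms_eq_on_generators)
  note lin = bilinear_formI linearity linear_form_teval2_\<phi>_comp bilinear_form_comp[OF b]
  show "linear_form sG (\<lambda>\<omega>. teval2 B (\<phi> (lact a \<omega>)))"
    by (intro lin)
  show "linear_form sG (\<lambda>\<omega>. teval2 (\<lambda>h x. teval2 (\<lambda>h' w. B (mulH h h') (lact x w)) (\<phi> \<omega>)) (\<phi>A a))"
    by (intro lin)
  fix a' b'
  have "lact a (lact a' (d b')) = lact (mulA (inv \<alpha> a) a') (d (\<alpha> b'))"
    by (metis \<alpha>_inv lact_hom_assoc d_\<alpha>)
  then have "teval2 B (\<phi> (lact a (lact a' (d b')))) = gen_value B (mulA (inv \<alpha> a) a') (\<alpha> b')"
    by (simp add: teval2_\<phi>_generator[OF b])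
  also have "\<dots> = teval2 (\<lambda>h1 x1. teval2 (\<lambda>h2 x2. teval2 (\<lambda>h' y.
      B (mulH (mulH h1 h2) h') (lact (mulA x1 x2) (d y))) (\<phi>A (\<alpha> b'))) (\<phi>A a')) (\<phi>A (inv \<alpha> a))"
    unfolding gen_value_def by (rule teval2_\<phi>A_mult) (intro lin)
  also have "\<dots> = teval2 (\<lambda>h1 x1. teval2 (\<lambda>h2 x2. teval2 (\<lambda>h' y.
      B (mulH (mulH (inv \<beta> h1) h2) h') (lact (mulA (inv \<alpha> x1) x2) (d y))) (\<phi>A (\<alpha> b'))) (\<phi>A a'))
      (\<phi>A a)"
    by (rule teval2_\<phi>A_inv_\<alpha>) (intro lin)
  also have "\<dots> = teval2 (\<lambda>h1 x1. teval2 (\<lambda>h2 x2. teval2 (\<lambda>k y.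
      B (mulH (mulH (inv \<beta> h1) h2) (\<beta> k)) (lact (mulA (inv \<alpha> x1) x2) (d (\<alpha> y)))) (\<phi>A b')) (\<phi>A a'))
      (\<phi>A a)"
    by (intro teval2_cong teval2_\<phi>A_\<alpha>) (intro lin)
  also have "\<dots> = teval2 (\<lambda>h x. teval2 (\<lambda>h2 x2. teval2 (\<lambda>k y.
      B (mulH h (mulH h2 k)) (lact x (lact x2 (d y)))) (\<phi>A b')) (\<phi>A a')) (\<phi>A a)"
    by (simp add: d_\<alpha> lact_hom_assoc[symmetric] mulH_hom_assoc[symmetric] \<beta>_inv \<alpha>_inv)
  also have "\<dots> = teval2 (\<lambda>h x. teval2 (\<lambda>h' w. B (mulH h h') (lact x w)) (\<phi> (lact a' (d b')))) (\<phi>A a)"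
    by (intro teval2_cong, subst teval2_\<phi>_generator) (intro lin, simp add: gen_value_def)
  finally show "teval2 B (\<phi> (lact a (lact a' (d b')))) =
    teval2 (\<lambda>h x. teval2 (\<lambda>h' w. B (mulH h h') (lact x w)) (\<phi> (lact a' (d b')))) (\<phi>A a)" .
qed

lemma teval2_\<phi>_generator_mult_inv_\<alpha>:
  assumes b: "bilinear_form sH sG B"
  shows "teval2 B (\<phi> (lact (\<alpha> a) (d (mulA b (inv \<alpha> c))))) =
    teval2 (\<lambda>h x. teval2 (\<lambda>k y. teval2 (\<lambda>k' y'.
      B (mulH (\<beta> h) (mulH k (inv \<beta> k'))) (lact (\<alpha> x) (d (mulA y (inv \<alpha> y'))))) (\<phi>A c)) (\<phi>A b)) (\<phi>A a)"
proof -
  note lin = bilinear_formI linearity bilinear_form_comp[OF b]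
  have "teval2 B (\<phi> (lact (\<alpha> a) (d (mulA b (inv \<alpha> c))))) =
    teval2 (\<lambda>h x. teval2 (\<lambda>k y. B (mulH h k) (lact x (d y))) (\<phi>A (mulA b (inv \<alpha> c)))) (\<phi>A (\<alpha> a))"
    unfolding teval2_\<phi>_generator[OF b] gen_value_def ..
  also have "\<dots> = teval2 (\<lambda>h x. teval2 (\<lambda>k y.
      B (mulH (\<beta> h) k) (lact (\<alpha> x) (d y))) (\<phi>A (mulA b (inv \<alpha> c)))) (\<phi>A a)"
    by (rule teval2_\<phi>A_\<alpha>) (intro lin)
  also have "\<dots> = teval2 (\<lambda>h x. teval2 (\<lambda>k y. teval2 (\<lambda>k' y'.
      B (mulH (\<beta> h) (mulH k k')) (lact (\<alpha> x) (d (mulA y y')))) (\<phi>A (inv \<alpha> c))) (\<phi>A b)) (\<phi>A a)"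
    by (intro teval2_cong teval2_\<phi>A_mult) (intro lin)
  also have "\<dots> = teval2 (\<lambda>h x. teval2 (\<lambda>k y. teval2 (\<lambda>k' y'.
      B (mulH (\<beta> h) (mulH k (inv \<beta> k'))) (lact (\<alpha> x) (d (mulA y (inv \<alpha> y'))))) (\<phi>A c)) (\<phi>A b)) (\<phi>A a)"
    by (intro teval2_cong teval2_\<phi>A_inv_\<alpha>) (intro lin)
  finally show ?thesis .
qed

text \<open>Again it suffices to take \<open>\<omega> = a\<cdot>db\<close>; then \<open>ract_generator\<close> rewrites \<open>\<omega>\<cdot>c\<close> as a
  combination of generators.\<close>

lemma teval2_\<phi>_ract:
  assumes b: "bilinear_form sH sG B"
  shows "teval2 B (\<phi> (ract \<omega> c)) = teval2 (\<lambda>h w. teval2 (\<lambda>k y. B (mulH h k) (ract w y)) (\<phi>A c)) (\<phi> \<omega>)"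
proof (rule linear_forms_eq_on_generators)
  note lin = bilinear_formI linearity linear_form_teval2_\<phi>_comp bilinear_form_comp[OF b]
  show "linear_form sG (\<lambda>\<omega>. teval2 B (\<phi> (ract \<omega> c)))"
    by (intro lin)
  show "linear_form sG (\<lambda>\<omega>. teval2 (\<lambda>h w. teval2 (\<lambda>k y. B (mulH h k) (ract w y)) (\<phi>A c)) (\<phi> \<omega>))"
    by (intro lin)
  fix a b
  have "teval2 B (\<phi> (ract (lact a (d b)) c)) =
      teval2 B (\<phi> (lact (\<alpha> a) (d (mulA b (inv \<alpha> c))))) - teval2 B (\<phi> (lact (mulA a b) (d c)))"
    unfolding ract_generator by (rule linear_form_diff[OF linear_form_teval2_\<phi>[OF assms]])
  also have "teval2 B (\<phi> (lact (mulA a b) (d c))) = teval2 (\<lambda>h x. teval2 (\<lambda>k y. teval2 (\<lambda>k' y'.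
      B (mulH (mulH h k) k') (lact (mulA x y) (d y'))) (\<phi>A c)) (\<phi>A b)) (\<phi>A a)"
    unfolding teval2_\<phi>_generator[OF b] gen_value_def by (rule teval2_\<phi>A_mult) (intro lin)
  also have "teval2 B (\<phi> (lact (\<alpha> a) (d (mulA b (inv \<alpha> c))))) - \<dots> =
      teval2 (\<lambda>h x. teval2 (\<lambda>k y. teval2 (\<lambda>k' y'. B (mulH (mulH h k) k')
        (lact (\<alpha> x) (d (mulA y (inv \<alpha> y')))) - B (mulH (mulH h k) k') (lact (mulA x y) (d y')))
        (\<phi>A c)) (\<phi>A b)) (\<phi>A a)"
    by (simp only: teval2_\<phi>_generator_mult_inv_\<alpha>[OF b] teval2_diff mulH_hom_assoc \<beta>_inv)
  also have "\<dots> = teval2 (\<lambda>h x. teval2 (\<lambda>k y. teval2 (\<lambda>k' y'.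
      B (mulH (mulH h k) k') (ract (lact x (d y)) y')) (\<phi>A c)) (\<phi>A b)) (\<phi>A a)"
    unfolding ract_generator linear_form_diff[OF bilinear_form_right[OF b]] ..
  also have "\<dots> = teval2 (\<lambda>h w. teval2 (\<lambda>k y. B (mulH h k) (ract w y)) (\<phi>A c)) (\<phi> (lact a (d b)))"
    by (subst teval2_\<phi>_generator) (intro lin, simp add: gen_value_def)
  finally show "teval2 B (\<phi> (ract (lact a (d b)) c)) =
      teval2 (\<lambda>h w. teval2 (\<lambda>k y. B (mulH h k) (ract w y)) (\<phi>A c)) (\<phi> (lact a (d b)))" .
qed

lemma \<phi>_covariant:
  "teq2 sH sG (\<phi> (lact (\<alpha> a) (ract \<omega> b)))
    (tlmult mulH lact (\<phi>A (\<alpha> a)) (trmult mulH ract (\<phi> \<omega>) (\<phi>A b)))"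
proof (rule teq2I)
  fix B
  assume b: "bilinear_form sH sG B"
  have "teval2 B (\<phi> (lact (\<alpha> a) (ract \<omega> b))) =
      teval2 (\<lambda>h x. teval2 (\<lambda>h' w. B (mulH h h') (lact x w)) (\<phi> (ract \<omega> b))) (\<phi>A (\<alpha> a))"
    by (rule teval2_\<phi>_lact[OF b])
  also have "\<dots> = teval2 (\<lambda>h x. teval2 (\<lambda>h' w. teval2 (\<lambda>k y.
      B (mulH h (mulH h' k)) (lact x (ract w y))) (\<phi>A b)) (\<phi> \<omega>)) (\<phi>A (\<alpha> a))"
    by (intro teval2_cong teval2_\<phi>_ract) (intro bilinear_formI linearity bilinear_form_comp[OF b])
  finally show "teval2 B (\<phi> (lact (\<alpha> a) (ract \<omega> b))) =
      teval2 B (tlmult mulH lact (\<phi>A (\<alpha> a)) (trmult mulH ract (\<phi> \<omega>) (\<phi>A b)))"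
    by (simp add: teval2_tlmult teval2_trmult)
qed

lemma \<phi>_d: "teq2 sH sG (\<phi> (d a)) (tid_d d (\<phi>A a))"
proof (rule teq2I)
  fix B
  assume b: "bilinear_form sH sG B"
  note lin = bilinear_formI linearity bilinear_form_comp[OF b]
  have "d a = lact oneA (d (inv \<alpha> a))"
    by (simp add: lact_oneA d_\<alpha>[symmetric] \<alpha>_inv)
  then have "teval2 B (\<phi> (d a)) =
      teval2 (\<lambda>h x. teval2 (\<lambda>h' y. B (mulH h h') (lact x (d y))) (\<phi>A (inv \<alpha> a))) (\<phi>A oneA)"
    by (simp add: teval2_\<phi>_generator[OF b] gen_value_def)
  also have "\<dots> = teval2 (\<lambda>h' y. B (mulH oneH h') (lact oneA (d y))) (\<phi>A (inv \<alpha> a))"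
    by (rule teval2_\<phi>A_one) (intro lin)
  also have "\<dots> = teval2 (\<lambda>h' y. B (\<beta> h') (d (\<alpha> y))) (\<phi>A (inv \<alpha> a))"
    by (simp add: mulH_oneH lact_oneA d_\<alpha>)
  also have "\<dots> = teval2 (\<lambda>h' y. B (\<beta> (inv \<beta> h')) (d (\<alpha> (inv \<alpha> y)))) (\<phi>A a)"
    by (rule teval2_\<phi>A_inv_\<alpha>) (intro lin)
  finally show "teval2 B (\<phi> (d a)) = teval2 B (tid_d d (\<phi>A a))"
    by (simp add: \<beta>_inv \<alpha>_inv teval2_tid_d)
qed

text \<open>Coassociativity is checked on generators: both sides reduce, via the coassociativity of
  \<open>\<phi>\<^sub>A\<close> and the multiplicativity of \<open>\<Delta>\<close>, to the same expression.\<close>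

lemma teval2_\<phi>_\<phi>_generator:
  assumes t: "trilinear_form sH sH sG T"
  shows "teval2 (\<lambda>h n. teval2 (\<lambda>u v. T (inv \<beta> h) u v) (\<phi> n)) (\<phi> (lact a (d b))) =
    teval2 (\<lambda>h x. teval2 (\<lambda>u v. teval2 (\<lambda>h' y. teval2 (\<lambda>u' v'.
      T (mulH u u') (mulH v v') (lact (inv \<alpha> x) (d (inv \<alpha> y)))) (\<Delta> h')) (\<phi>A b)) (\<Delta> h)) (\<phi>A a)"
proof -
  note lin = trilinear_formI bilinear_formI linearity linear_form_teval2_\<phi>_comp trilinear_form_comp[OF t]
  have "teval2 (\<lambda>h n. teval2 (\<lambda>u v. T (inv \<beta> h) u v) (\<phi> n)) (\<phi> (lact a (d b))) =
    teval2 (\<lambda>h x. teval2 (\<lambda>h' y. teval2 (\<lambda>u v.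
      T (inv \<beta> (mulH h h')) u v) (\<phi> (lact x (d y)))) (\<phi>A b)) (\<phi>A a)"
    by (subst teval2_\<phi>_generator) (intro lin, simp add: gen_value_def)
  also have "\<dots> = teval2 (\<lambda>h x. teval2 (\<lambda>h' y. teval2 (\<lambda>k x'. teval2 (\<lambda>k' y'.
      T (mulH (inv \<beta> h) (inv \<beta> h')) (mulH k k') (lact x' (d y'))) (\<phi>A y)) (\<phi>A x)) (\<phi>A b)) (\<phi>A a)"
    by (intro teval2_cong, subst teval2_\<phi>_generator) (intro lin, simp add: gen_value_def inv_\<beta>_mult)
  also have "\<dots> = teval2 (\<lambda>h x. teval2 (\<lambda>k x'. teval2 (\<lambda>h' y. teval2 (\<lambda>k' y'.
      T (mulH (inv \<beta> h) (inv \<beta> h')) (mulH k k') (lact x' (d y'))) (\<phi>A y)) (\<phi>A b)) (\<phi>A x)) (\<phi>A a)"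
    by (intro teval2_cong teval2_swap)
  also have "\<dots> = teval2 (\<lambda>h x. teval2 (\<lambda>u v. teval2 (\<lambda>h' y. teval2 (\<lambda>k' y'.
      T (mulH u (inv \<beta> h')) (mulH v k') (lact (inv \<alpha> x) (d y'))) (\<phi>A y)) (\<phi>A b)) (\<Delta> h)) (\<phi>A a)"
    by (rule teval2_\<phi>A_coassoc[where T = "\<lambda>p q r. teval2 (\<lambda>h' y. teval2 (\<lambda>k' y'.
        T (mulH p (inv \<beta> h')) (mulH q k') (lact r (d y'))) (\<phi>A y)) (\<phi>A b)"])
      (intro lin)
  also have "\<dots> = teval2 (\<lambda>h x. teval2 (\<lambda>u v. teval2 (\<lambda>h' y. teval2 (\<lambda>u' v'.
      T (mulH u u') (mulH v v') (lact (inv \<alpha> x) (d (inv \<alpha> y)))) (\<Delta> h')) (\<phi>A b)) (\<Delta> h)) (\<phi>A a)"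
    by (rule teval2_cong, rule teval2_cong,
        rule teval2_\<phi>A_coassoc[where T = "\<lambda>p q r. T (mulH _ p) (mulH _ q) (lact (inv \<alpha> _) (d r))"])
      (intro lin)
  finally show ?thesis .
qed

lemma teval2_\<Delta>_\<phi>_generator:
  assumes t: "trilinear_form sH sH sG T"
  shows "teval2 (\<lambda>h n. teval2 (\<lambda>u v. T u v (inv \<gamma> n)) (\<Delta> h)) (\<phi> (lact a (d b))) =
    teval2 (\<lambda>h x. teval2 (\<lambda>u v. teval2 (\<lambda>h' y. teval2 (\<lambda>u' v'.
      T (mulH u u') (mulH v v') (lact (inv \<alpha> x) (d (inv \<alpha> y)))) (\<Delta> h')) (\<phi>A b)) (\<Delta> h)) (\<phi>A a)"
proof -
  note lin = trilinear_formI bilinear_formI linearity linear_form_teval2_\<phi>_comp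
    linear_form_teval2_tmorphism_comp[OF tmorphism_\<Delta>] trilinear_form_comp[OF t]
  have "teval2 (\<lambda>h n. teval2 (\<lambda>u v. T u v (inv \<gamma> n)) (\<Delta> h)) (\<phi> (lact a (d b))) =
      teval2 (\<lambda>h x. teval2 (\<lambda>h' y. teval2 (\<lambda>u v.
        T u v (inv \<gamma> (lact x (d y)))) (\<Delta> (mulH h h'))) (\<phi>A b)) (\<phi>A a)"
    by (subst teval2_\<phi>_generator) (intro lin, simp add: gen_value_def)
  also have "\<dots> = teval2 (\<lambda>h x. teval2 (\<lambda>h' y. teval2 (\<lambda>u v. teval2 (\<lambda>u' v'.
      T (mulH u u') (mulH v v') (lact (inv \<alpha> x) (d (inv \<alpha> y)))) (\<Delta> h')) (\<Delta> h)) (\<phi>A b)) (\<phi>A a)"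
    by (intro teval2_cong, subst teval2_\<Delta>_mult) (intro lin, simp add: inv_\<gamma>_generator)
  also have "\<dots> = teval2 (\<lambda>h x. teval2 (\<lambda>u v. teval2 (\<lambda>h' y. teval2 (\<lambda>u' v'.
      T (mulH u u') (mulH v v') (lact (inv \<alpha> x) (d (inv \<alpha> y)))) (\<Delta> h')) (\<phi>A b)) (\<Delta> h)) (\<phi>A a)"
    by (intro teval2_cong teval2_swap)
  finally show ?thesis .
qed

lemma \<phi>_coassoc: "teq3 sH sH sG
    (concat (map (\<lambda>(h, n). map (\<lambda>(u, v). (inv \<beta> h, u, v)) (\<phi> n)) (\<phi> m)))
    (concat (map (\<lambda>(h, n). map (\<lambda>(u, v). (u, v, inv \<gamma> n)) (\<Delta> h)) (\<phi> m)))"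
proof (rule teq3I)
  fix T
  assume t: "trilinear_form sH sH sG T"
  note lin = trilinear_formI bilinear_formI linearity linear_form_teval2_\<phi>_comp
    linear_form_teval2_tmorphism_comp[OF tmorphism_\<Delta>] trilinear_form_comp[OF t]
  have "teval2 (\<lambda>h n. teval2 (\<lambda>u v. T (inv \<beta> h) u v) (\<phi> n)) (\<phi> m) =
      teval2 (\<lambda>h n. teval2 (\<lambda>u v. T u v (inv \<gamma> n)) (\<Delta> h)) (\<phi> m)"
    by (rule linear_forms_eq_on_generators)
      (intro lin, intro lin, simp add: teval2_\<phi>_\<phi>_generator[OF t] teval2_\<Delta>_\<phi>_generator[OF t])
  then show "teval3 T (concat (map (\<lambda>(h, n). map (\<lambda>(u, v). (inv \<beta> h, u, v)) (\<phi> n)) (\<phi> m))) =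
      teval3 T (concat (map (\<lambda>(h, n). map (\<lambda>(u, v). (u, v, inv \<gamma> n)) (\<Delta> h)) (\<phi> m)))"
    unfolding teval3_concat_map teval3_map_left teval3_map_right .
qed

lemma \<phi>_counit: "sum_list (map (\<lambda>(h, n). sG (\<epsilon> h) n) (\<phi> m)) = inv \<gamma> m"
proof (rule eq_if_linear_forms_eq[OF vector_space_\<Gamma>])
  fix g
  assume g: "linear_form sG g"
  have counit_A: "teval2 (\<lambda>h y. \<epsilon> h * g (lact x (d y))) (\<phi>A b) = g (lact x (d (inv \<alpha> b)))" for x b
    unfolding \<phi>A_counit[symmetric] by (rule linear_form_sum_list_scale[symmetric]) (intro linear_form_comp[OF g] linearity)
  have "teval2 (\<lambda>h n. \<epsilon> h * g n) (\<phi> m) = g (inv \<gamma> m)"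
  proof (rule linear_forms_eq_on_generators[where f = "\<lambda>m. teval2 (\<lambda>h n. \<epsilon> h * g n) (\<phi> m)"])
    show "linear_form sG (\<lambda>m. teval2 (\<lambda>h n. \<epsilon> h * g n) (\<phi> m))"
      by (intro bilinear_formI linearity linear_form_teval2_\<phi>_comp linear_form_comp[OF g])
    show "linear_form sG (\<lambda>m. g (inv \<gamma> m))"
      by (intro linear_form_comp[OF g] linearity)
    fix a b
    have "teval2 (\<lambda>h n. \<epsilon> h * g n) (\<phi> (lact a (d b))) =
        teval2 (\<lambda>h x. \<epsilon> h * teval2 (\<lambda>h' y. \<epsilon> h' * g (lact x (d y))) (\<phi>A b)) (\<phi>A a)"
      by (subst teval2_\<phi>_generator)
        (intro bilinear_formI linearity linear_form_comp[OF g], simp add: gen_value_def \<epsilon>_mult mult.assoc teval2_cmult)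
    also have "\<dots> = g (lact (inv \<alpha> a) (d (inv \<alpha> b)))"
      unfolding counit_A \<phi>A_counit[symmetric]
      by (rule linear_form_sum_list_scale[symmetric]) (intro linear_form_comp[OF g] linearity)
    finally show "teval2 (\<lambda>h n. \<epsilon> h * g n) (\<phi> (lact a (d b))) = g (inv \<gamma> (lact a (d b)))"
      by (simp add: inv_\<gamma>_generator)
  qed
  then show "g (sum_list (map (\<lambda>(h, n). sG (\<epsilon> h) n) (\<phi> m))) = g (inv \<gamma> m)"
    by (simp add: linear_form_sum_list_scale[OF g])
qed

lemma left_covariant: "left_covariant sH \<beta> mulH \<Delta> \<epsilon> \<alpha> \<phi>A sG \<gamma> lact ract d"
  unfolding left_covariant_def hom_comodule_def
  using hom_object_\<Gamma> tmorphism_\<phi> \<phi>_coassoc \<phi>_counit \<phi>_covariant \<phi>_d by blast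

end

lemma (in comodule_FODC) coacts_on_generators_imp_left_covariant:
  assumes "coacts_on_generators \<phi>"
  shows "left_covariant sH \<beta> mulH \<Delta> \<epsilon> \<alpha> \<phi>A sG \<gamma> lact ract d"
proof -
  interpret generator_coaction sH \<beta> mulH oneH \<Delta> \<epsilon> sA \<alpha> mulA oneA \<phi>A sG \<gamma> lact ract d \<phi>
    using assms by unfold_locales blast+
  show ?thesis
    by (rule left_covariant)
qed

theorem mainTheorem1:
  fixes sH :: "'k::field \<Rightarrow> 'h::ab_group_add \<Rightarrow> 'h" and \<beta> :: "'h \<Rightarrow> 'h"
    and mulH :: "'h \<Rightarrow> 'h \<Rightarrow> 'h" and oneH :: 'h
    and \<Delta> :: "'h \<Rightarrow> ('h \<times> 'h) list" and \<epsilon> :: "'h \<Rightarrow> 'k"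
    and sA :: "'k \<Rightarrow> 'a::ab_group_add \<Rightarrow> 'a" and \<alpha> :: "'a \<Rightarrow> 'a"
    and mulA :: "'a \<Rightarrow> 'a \<Rightarrow> 'a" and oneA :: 'a
    and \<phi>A :: "'a \<Rightarrow> ('h \<times> 'a) list"
    and sG :: "'k \<Rightarrow> 'g::ab_group_add \<Rightarrow> 'g" and \<gamma> :: "'g \<Rightarrow> 'g"
    and lact :: "'a \<Rightarrow> 'g \<Rightarrow> 'g" and ract :: "'g \<Rightarrow> 'a \<Rightarrow> 'g" and d :: "'a \<Rightarrow> 'g"
  assumes H: "hom_bialgebra sH \<beta> mulH oneH \<Delta> \<epsilon>"
    and A: "hom_comodule_algebra sH \<beta> mulH oneH \<Delta> \<epsilon> sA \<alpha> mulA oneA \<phi>A"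
    and G: "hom_FODC sA \<alpha> mulA oneA sG \<gamma> lact ract d"
  shows "(left_covariant sH \<beta> mulH \<Delta> \<epsilon> \<alpha> \<phi>A sG \<gamma> lact ract d
            \<longleftrightarrow> (\<exists>\<phi>. tmorphism sG \<gamma> sH \<beta> sG \<gamma> \<phi> \<and>
                   (\<forall>a b. teq2 sH sG (\<phi> (lact a (d b))) (tlmult mulH lact (\<phi>A a) (tid_d d (\<phi>A b))))))
       \<and> ((\<exists>\<phi>. tmorphism sG \<gamma> sH \<beta> sG \<gamma> \<phi> \<and>
                   (\<forall>a b. teq2 sH sG (\<phi> (lact a (d b))) (tlmult mulH lact (\<phi>A a) (tid_d d (\<phi>A b)))))
            \<longleftrightarrow> (\<forall>ps :: ('a \<times> 'a) list.
                   sum_list (map (\<lambda>(a, b). lact a (d b)) ps) = 0 \<longrightarrow>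
                   teq2 sH sG
                     (concat (map (\<lambda>(a, b). tlmult mulH lact (\<phi>A a) (tid_d d (\<phi>A b))) ps)) []))"
proof -
  interpret comodule_FODC sH \<beta> mulH oneH \<Delta> \<epsilon> sA \<alpha> mulA oneA \<phi>A sG \<gamma> lact ract d
    using H A G by unfold_locales
  have "left_covariant sH \<beta> mulH \<Delta> \<epsilon> \<alpha> \<phi>A sG \<gamma> lact ract d \<longleftrightarrow> (\<exists>\<phi>. coacts_on_generators \<phi>)"
    using left_covariant_imp_coacts_on_generators coacts_on_generators_imp_left_covariant by blast
  moreover have "(\<exists>\<phi>. coacts_on_generators \<phi>) \<longleftrightarrow> respects_relations"
    using coacts_on_generators_respects_relations respects_relations_imp_coacts_on_generators by blast
  ultimately show ?thesis
    unfolding respects_relations_def dsum_def dsum_image_def by blast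
qed

end
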